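(* Suppose conditions (i)–(iii) of the context hold. Then there exist $k_0>0$ and $C>0$, independent of $h$ and $k$, such that for every self-adjoint $T\in\mathcal{L}(H)$ and all sufficiently small $h\in(0,h_0)$, $k\in(0,k_0)$, \[ \bigl|\operatorname{tr}\bigl(T(\widetilde Q_{h,k}^\beta\widetilde Q_{h,k}^{\beta*}-\widetilde L_h^{-\beta}\widetilde L_h^{-\beta*})\bigr)\bigr|\le C\bigl(e^{-\pi^2/k}h^{-d}+e^{-\pi^2/(2k)}+e^{-\pi^2/(2k)}f_{\alpha,\beta}(h)\bigr)\|T\|_{\mathcal{L}(H)}, \] where $\widetilde Q_{h,k}^\beta:=Q_{h,k}^\beta\widetilde\Pi_h$, $\widetilde L_h^{-\beta}:=L_h^{-\beta}\widetilde\Pi_h$, $^*$ denotes the $H$-adjoint, and $f_{\alpha,\beta}(h):=h^{d(\alpha\beta-1)}$ if $\alpha\beta\ne1$, $f_{\alpha,\beta}(h):=|\ln h|$ if $\alpha\beta=1$.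
   Context: $H$ separable real Hilbert space; $L\colon\mathscr{D}(L)\subset H\to H$ densely defined, self-adjoint, positive definite with compact inverse, $H$-orthonormal eigenvectors $\{e_j\}$, nondecreasing eigenvalues $\{\lambda_j\}$ with $c_\lambda j^\alpha\le\lambda_j\le C_\lambda j^\alpha$ ($\alpha,c_\lambda,C_\lambda>0$); $\beta\in(0,1)$. $(V_h)_{h\in(0,1)}$ finite-dimensional subspaces of $\mathscr{D}(L^{1/2})$, $N_h=\dim V_h$, $L_h\colon V_h\to V_h$ with $(L_h\psi_h,\phi_h)_H=\langle L\psi_h,\phi_h\rangle$, with $H$-orthonormal eigenvectors $\{e_{j,h}\}_{j=1}^{N_h}$ and nondecreasing eigenvalues $\{\lambda_{j,h}\}$. $\widetilde\Pi_h\colon H\to V_h$, $\widetilde\Pi_hg:=\sum_{j=1}^{N_h}(g,e_j)_He_{j,h}$. For $k>0$, $y_\ell=\ell k$, $K^-=\lceil\pi^2/(4\beta k^2)\rceil$, $K^+=\lceil\pi^2/(4(1-\beta)k^2)\rceil$, $Q_{h,k}^\beta:=\frac{2k\sin(\pi\beta)}{\pi}\sum_{\ell=-K^-}^{K^+}e^{2\beta y_\ell}(\mathrm{Id}_{V_h}+e^{2y_\ell}L_h)^{-1}$. Conditions: (i) there is $d\in\mathbb{N}$ with $N_h\propto h^{-d}$; (ii) there are $C_1,C_2>0$, $h_0\in(0,1)$, $r,s>0$, $q>1$ with $\lambda_j\le\lambda_{j,h}\le\lambda_j+C_1h^r\lambda_j^q$ and $\|e_j-e_{j,h}\|_H^2\le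 C_2h^{2s}\lambda_j^q$ for all $h\in(0,h_0)$, $j\le N_h$; (iii) $\frac1{2\beta}<\alpha\le\min\{\frac{r}{(q-1)d},\frac{2s}{qd}\}$. *)

theory Defs
  imports "HOL-Analysis.Analysis"
begin

text \<open>Spectral model of the operator L (eigenpairs (e j, lam j), indices j \<ge> 1).
  The Hilbert space H is a type 'a of class real_inner + complete_space.\<close>

definition domL12 :: "(nat \<Rightarrow> 'a::real_inner) \<Rightarrow> (nat \<Rightarrow> real) \<Rightarrow> 'a set" where
  "domL12 e lam = {x. summable (\<lambda>j. lam (Suc j) * (inner x (e (Suc j)))\<^sup>2)}"

definition formL :: "(nat \<Rightarrow> 'a::real_inner) \<Rightarrow> (nat \<Rightarrow> real) \<Rightarrow> 'a \<Rightarrow> 'a \<Rightarrow> real" where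
  "formL e lam psi phi = (\<Sum>j. lam (Suc j) * inner psi (e (Suc j)) * inner phi (e (Suc j)))"

definition hadjoint :: "('a::real_inner \<Rightarrow> 'a) \<Rightarrow> 'a \<Rightarrow> 'a" where
  "hadjoint A y = (THE z. \<forall>x. inner (A x) y = inner x z)"

definition trace_on :: "(nat \<Rightarrow> 'a::real_inner) \<Rightarrow> ('a \<Rightarrow> 'a) \<Rightarrow> real" where
  "trace_on e A = (\<Sum>j. inner (A (e (Suc j))) (e (Suc j)))"

definition resolv :: "'a::real_vector set \<Rightarrow> ('a \<Rightarrow> 'a) \<Rightarrow> real \<Rightarrow> 'a \<Rightarrow> 'a" where
  "resolv V A t w = (THE v. v \<in> V \<and> v + t *\<^sub>R A v = w)"

definition Kminus :: "real \<Rightarrow> real \<Rightarrow> int" where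
  "Kminus \<beta> k = \<lceil>pi\<^sup>2 / (4 * \<beta> * k\<^sup>2)\<rceil>"

definition Kplus :: "real \<Rightarrow> real \<Rightarrow> int" where
  "Kplus \<beta> k = \<lceil>pi\<^sup>2 / (4 * (1 - \<beta>) * k\<^sup>2)\<rceil>"

definition Qop :: "'a::real_vector set \<Rightarrow> ('a \<Rightarrow> 'a) \<Rightarrow> real \<Rightarrow> real \<Rightarrow> 'a \<Rightarrow> 'a" where
  "Qop V A \<beta> k w = (2 * k * sin (pi * \<beta>) / pi) *\<^sub>R
     (\<Sum>l\<in>{- Kminus \<beta> k .. Kplus \<beta> k}.
        exp (2 * \<beta> * (of_int l * k)) *\<^sub>R resolv V A (exp (2 * (of_int l * k))) w)"

definition fracpow :: "(nat \<Rightarrow> 'a::real_inner) \<Rightarrow> (nat \<Rightarrow> real) \<Rightarrow> nat \<Rightarrow> real \<Rightarrow> 'a \<Rightarrow> 'a" where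
  "fracpow eh lamh N \<beta> w = (\<Sum>j\<in>{1..N}. (lamh j powr (- \<beta>) * inner w (eh j)) *\<^sub>R eh j)"

definition Pitilde :: "(nat \<Rightarrow> 'a::real_inner) \<Rightarrow> (nat \<Rightarrow> 'a) \<Rightarrow> nat \<Rightarrow> 'a \<Rightarrow> 'a" where
  "Pitilde e eh N g = (\<Sum>j\<in>{1..N}. inner g (e j) *\<^sub>R eh j)"

definition f_ab :: "real \<Rightarrow> real \<Rightarrow> real \<Rightarrow> real \<Rightarrow> real" where
  "f_ab d \<alpha> \<beta> h = (if \<alpha> * \<beta> \<noteq> 1 then h powr (d * (\<alpha> * \<beta> - 1)) else \<bar>ln h\<bar>)"

end

theory Submission
  imports Defs "HOL-Complex_Analysis.Complex_Analysis" "HOL-Real_Asymp.Real_Asymp"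
begin

(* Q_{h,k}^beta and L_h^{-beta} are diagonal in the discrete eigenbasis, so after composing with
   Pi~_h both are of the form g |-> sum_j c_j (g, e_j) e_{j,h}, and the trace in the statement equals sum_{j <= N_h} (q(lambda_{j,h})^2 - lambda_{j,h}^{-2 beta})
   (T e_{j,h}, e_{j,h}), where q is the scalar sinc quadrature of the Balakrishnan integral
   lambda^{-beta} = (2 sin(pi beta)/pi) int e^{2 beta y} / (1 + e^{2y} lambda) dy.

   Uniformly in lambda >= lambda_1 one has |q(lambda) - lambda^{-beta}| <= C e^{-pi^2/(2k)}: the
   truncation at K^- and K^+ costs e^{-pi^2/(2k)} because the integrand decays like e^{2 beta y}
   and e^{-2(1-beta) y}, and the untruncated trapezoidal sum is k times the k-periodisation of the
   integrand. For a k-periodic function f, holomorphic in a strip of half-width rho, the residue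
   theorem applied to f(w) pi cot(pi (w - a)/k) on a period rectangle gives
   |k f(a) - int_a^{a+k} f| <= 4 k max|f| e^{-2 pi rho/k}; here rho = pi/4.

   Hence |q^2 - lambda^{-2 beta}| <= E^2 + 2 E lambda^{-beta} with E = C e^{-pi^2/(2k)}, and
   lambda_{j,h}^{-beta} <= lambda_j^{-beta} <= c j^{-alpha beta}, N_h <= c h^{-d} and
   sum_{j <= N} j^{-alpha beta} <= K_1 + K_2 f_{alpha,beta}(h) give the bound. *)

section \<open>The trapezoidal rule for periodic holomorphic functions\<close>

lemma path_image_rectpath_sides:
  "path_image (rectpath a1 a3) =
     closed_segment a1 (Complex (Re a3) (Im a1)) \<union> closed_segment (Complex (Re a3) (Im a1)) a3 \<union>
     closed_segment a3 (Complex (Re a1) (Im a3)) \<union> closed_segment (Complex (Re a1) (Im a3)) a1"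
  by (simp add: rectpath_def Let_def path_image_join Un_assoc)

lemma contour_integral_rectpath_sides:
  fixes f :: "complex \<Rightarrow> complex" and a1 a3 :: complex
  defines "b2 \<equiv> Complex (Re a3) (Im a1)" and "b4 \<equiv> Complex (Re a1) (Im a3)"
  assumes cont: "continuous_on (path_image (rectpath a1 a3)) f"
  shows "contour_integral (rectpath a1 a3) f =
           contour_integral (linepath a1 b2) f + contour_integral (linepath b2 a3) f +
           contour_integral (linepath a3 b4) f + contour_integral (linepath b4 a1) f"
proof -
  have side: "(f has_contour_integral contour_integral (linepath p q) f) (linepath p q)"
    if "closed_segment p q \<subseteq> path_image (rectpath a1 a3)" for p q
    using continuous_on_subset[OF cont that]
    by (intro has_contour_integral_integral contour_integrable_continuous_linepath)
  have "(f has_contour_integral (contour_integral (linepath a1 b2) f + (contour_integral (linepath b2 a3) f +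
           (contour_integral (linepath a3 b4) f + contour_integral (linepath b4 a1) f))))
         (linepath a1 b2 +++ linepath b2 a3 +++ linepath a3 b4 +++ linepath b4 a1)"
    by (intro has_contour_integral_join side valid_path_join valid_path_linepath)
       (auto simp: path_image_rectpath_sides b2_def b4_def)
  hence "(f has_contour_integral (contour_integral (linepath a1 b2) f + (contour_integral (linepath b2 a3) f +
           (contour_integral (linepath a3 b4) f + contour_integral (linepath b4 a1) f)))) (rectpath a1 a3)"
    by (simp add: rectpath_def Let_def b2_def b4_def)
  thus ?thesis by (simp add: contour_integral_unique add.assoc)
qed

lemma linepath_translate: "linepath (p + c) (q + c) = (+) c \<circ> linepath p q"
  by (rule ext) (simp add: linepath_def algebra_simps scaleR_conv_of_real)

lemma contour_integral_periodic_sides_cancel: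
  fixes f :: "complex \<Rightarrow> complex"
  assumes per: "\<And>w. w \<in> closed_segment p q \<Longrightarrow> f (w + c) = f w"
      and cont: "continuous_on (closed_segment p q) f"
  shows "contour_integral (linepath (p + c) (q + c)) f + contour_integral (linepath q p) f = 0"
proof -
  have "contour_integral (linepath (p + c) (q + c)) f = contour_integral (linepath p q) (\<lambda>x. f (x + c))"
    by (simp add: linepath_translate contour_integral_translate)
  also have "\<dots> = contour_integral (linepath p q) f"
    by (rule contour_integral_eq) (use per in auto)
  also have "\<dots> = - contour_integral (linepath q p) f"
    by (rule contour_integral_reverse_linepath[OF cont])
  finally show ?thesis by simp
qed

lemma periodic_horizontal_integrals_eq:
  fixes f :: "complex \<Rightarrow> complex"
  assumes holo: "f holomorphic_on S" and "convex S"
      and box: "cbox (Complex x0 y1) (Complex (x0 + k) y2) \<subseteq> S" and "0 \<le> k" "y1 \<le> y2"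
      and per: "\<And>w. w \<in> closed_segment (Complex x0 y1) (Complex x0 y2) \<Longrightarrow> f (w + of_real k) = f w"
  shows "contour_integral (linepath (Complex x0 y1) (Complex (x0 + k) y1)) f =
         contour_integral (linepath (Complex x0 y2) (Complex (x0 + k) y2)) f"
proof -
  define A where "A = Complex x0 y1"
  define C where "C = Complex (x0 + k) y2"
  define B2 where "B2 = Complex (x0 + k) y1"
  define B4 where "B4 = Complex x0 y2"
  have ord: "Re A \<le> Re C" "Im A \<le> Im C" using assms by (auto simp: A_def C_def)
  have img: "path_image (rectpath A C) \<subseteq> S"
    using path_image_rectpath_subset_cbox[OF ord] box by (auto simp: A_def C_def)
  have cont: "continuous_on (path_image (rectpath A C)) f"
    using holomorphic_on_imp_continuous_on[OF holomorphic_on_subset[OF holo img]] .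
  have corners: "Complex (Re C) (Im A) = B2" "Complex (Re A) (Im C) = B4"
    by (simp_all add: A_def B2_def C_def B4_def)
  note sides = path_image_rectpath_sides[of A C, unfolded corners]
  have "(f has_contour_integral 0) (rectpath A C)"
    by (rule Cauchy_theorem_convex_simple[OF holo \<open>convex S\<close>]) (use img in auto)
  hence "contour_integral (rectpath A C) f = 0" by (rule contour_integral_unique)
  moreover note contour_integral_rectpath_sides[OF cont, unfolded corners]
  moreover have "contour_integral (linepath (A + of_real k) (B4 + of_real k)) f +
      contour_integral (linepath B4 A) f = 0"
    using per continuous_on_subset[OF cont, of "closed_segment A B4"] sides
    by (intro contour_integral_periodic_sides_cancel) (auto simp: A_def B4_def closed_segment_commute)
  moreover have "A + of_real k = B2" "B4 + of_real k = C"
    by (simp_all add: A_def B2_def B4_def C_def complex_eq_iff)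
  moreover have "contour_integral (linepath C B4) f = - contour_integral (linepath B4 C) f"
    using continuous_on_subset[OF cont, of "closed_segment B4 C"] sides
    by (intro contour_integral_reverse_linepath) (auto simp: closed_segment_commute)
  ultimately have "contour_integral (linepath A B2) f = contour_integral (linepath B4 C) f"
    by (simp add: algebra_simps)
  thus ?thesis by (simp add: A_def B2_def B4_def C_def)
qed

lemma norm_cot_minus_i_le:
  fixes u :: complex and t :: real
  assumes "Im u = -t" "t > 0"
  shows "sin u \<noteq> 0" "cmod (cos u / sin u - \<i>) \<le> 2 * exp (-2*t) / (1 - exp (-2*t))"
proof -
  define p where "p = exp (\<i> * u)"
  define q where "q = exp (-(\<i> * u))"
  have np: "cmod p = exp t" using assms by (simp add: p_def)
  have nq: "cmod q = exp (-t)" using assms by (simp add: q_def)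
  have lt: "exp (-t) < exp t" using assms by simp
  have "cmod (p - q) \<ge> cmod p - cmod q" by (rule norm_triangle_ineq2)
  hence dpq: "cmod (p - q) \<ge> exp t - exp (-t)" using np nq by simp
  hence pq0: "p - q \<noteq> 0" using lt by auto
  have s: "sin u = (p - q) / (2*\<i>)" by (simp add: sin_exp_eq p_def q_def)
  have c: "cos u = (p + q) / 2" by (simp add: cos_exp_eq p_def q_def)
  show "sin u \<noteq> 0" using s pq0 by simp
  have "cos u / sin u - \<i> = 2 * \<i> * q / (p - q)"
    using pq0 by (simp add: s c field_simps)
  hence "cmod (cos u / sin u - \<i>) = 2 * exp (-t) / cmod (p - q)"
    by (simp add: norm_mult norm_divide nq)
  also have "\<dots> \<le> 2 * exp (-t) / (exp t - exp (-t))"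
  proof (rule divide_left_mono[OF dpq])
    show "0 < cmod (p - q) * (exp t - exp (- t))" using dpq lt by (intro mult_pos_pos) auto
  qed simp
  also have "\<dots> = 2 * exp (-2*t) / (1 - exp (-2*t))"
  proof -
    have "exp t * exp (-2*t) = exp (-t)" by (simp add: exp_add[symmetric])
    moreover have "1 - exp (-2*t) > 0" using assms by simp
    ultimately show ?thesis by (simp add: field_simps)
  qed
  finally show "cmod (cos u / sin u - \<i>) \<le> 2 * exp (-2*t) / (1 - exp (-2*t))" .
qed

lemma norm_cot_plus_sgn_i_le:
  fixes u :: complex and t :: real
  assumes "\<bar>Im u\<bar> = t" "1 \<le> 2 * t"
  shows "sin u \<noteq> 0" "cmod (cos u / sin u + of_real (sgn (Im u)) * \<i>) \<le> 4 * exp (-2*t)"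
proof -
  have t: "t > 0" using assms by linarith
  have "exp (-2*t) \<le> exp (-1)" using assms by simp
  also have "exp (-1::real) \<le> 1/2"
    using exp_ge_add_one_self[of 1] by (simp add: exp_minus field_simps)
  finally have "1 - exp (-2*t) \<ge> 1/2" by simp
  hence "2 * exp (-2*t) / (1 - exp (-2*t)) \<le> 2 * exp (-2*t) / (1/2)"
    by (intro divide_left_mono) (use t in auto)
  hence "2 * exp (-2*t) / (1 - exp (-2*t)) \<le> 4 * exp (-2*t)" by simp
  moreover have "sin u \<noteq> 0 \<and> cmod (cos u / sin u + of_real (sgn (Im u)) * \<i>)
                   \<le> 2 * exp (-2*t) / (1 - exp (-2*t))"
  proof (cases "Im u < 0")
    case True
    thus ?thesis using norm_cot_minus_i_le[of u t] assms t by simp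
  next
    case False
    hence "Im (-u) = -t" "Im u > 0" using assms t by auto
    moreover have "cos (-u) / sin (-u) - \<i> = - (cos u / sin u + \<i>)" by simp
    ultimately show ?thesis using norm_cot_minus_i_le[of "-u" t] t
      by (simp only: norm_minus_cancel sin_minus) simp
  qed
  ultimately show "sin u \<noteq> 0" "cmod (cos u / sin u + of_real (sgn (Im u)) * \<i>) \<le> 4 * exp (-2*t)"
    by auto
qed

lemma contour_integral_mult_approx_const:
  fixes f g :: "complex \<Rightarrow> complex"
  assumes "continuous_on (closed_segment p q) f" "continuous_on (closed_segment p q) g"
      and "\<And>w. w \<in> closed_segment p q \<Longrightarrow> cmod (f w) \<le> M"
      and "\<And>w. w \<in> closed_segment p q \<Longrightarrow> cmod (g w - c) \<le> \<delta>"
  shows "cmod (contour_integral (linepath p q) (\<lambda>w. f w * g w) - c * contour_integral (linepath p q) f)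
           \<le> M * \<delta> * cmod (q - p)"
proof -
  have fi: "f contour_integrable_on linepath p q"
    and fgi: "(\<lambda>w. f w * g w) contour_integrable_on linepath p q"
    and fgci: "(\<lambda>w. f w * (g w - c)) contour_integrable_on linepath p q"
    using assms(1,2) by (auto intro!: contour_integrable_continuous_linepath continuous_intros)
  have "contour_integral (linepath p q) (\<lambda>w. f w * g w) - c * contour_integral (linepath p q) f
        = contour_integral (linepath p q) (\<lambda>w. f w * g w - c * f w)"
    using contour_integral_diff[OF fgi contour_integrable_lmul[OF fi, of c]]
          contour_integral_lmul[OF fi, of c] by simp
  also have "\<dots> = contour_integral (linepath p q) (\<lambda>w. f w * (g w - c))"
    by (simp add: algebra_simps)
  also have "cmod \<dots> \<le> M * \<delta> * cmod (q - p)"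
  proof (rule contour_integral_bound_linepath[OF fgci])
    show "0 \<le> M * \<delta>"
      using assms(3,4)[of p] by (intro mult_nonneg_nonneg) (auto intro: order_trans[OF norm_ge_zero])
    show "cmod (f w * (g w - c)) \<le> M * \<delta>" if "w \<in> closed_segment p q" for w
    proof -
      have "0 \<le> M" using assms(3)[OF that] norm_ge_zero order_trans by blast
      thus ?thesis unfolding norm_mult using assms(3,4)[OF that] by (intro mult_mono) auto
    qed
  qed
  finally show ?thesis .
qed

lemma sin_scaled_eq_0_imp:
  fixes w :: complex
  assumes k: "k > 0" and w: "\<bar>Re w - a\<bar> < k" and "sin (of_real pi * (w - of_real a) / of_real k) = 0"
  shows "w = of_real a"
proof -
  define v where "v = of_real pi * (w - of_real a) / of_real k"
  obtain n :: int where n: "v = of_real (real_of_int n * pi)"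
    using assms(3) sin_eq_0 unfolding v_def by blast
  have pi0: "(of_real pi :: complex) \<noteq> 0" and k0: "(of_real k :: complex) \<noteq> 0" using k by auto
  have "w - of_real a = v * of_real k / of_real pi"
    using pi0 k0 by (simp add: v_def field_simps)
  also have "\<dots> = of_real (real_of_int n * k)" using pi0 by (simp add: n field_simps)
  finally have "w - of_real a = of_real (real_of_int n * k)" .
  hence re: "Re w - a = real_of_int n * k" and im: "Im w = 0"
    by (simp_all add: complex_eq_iff)
  hence "\<bar>real_of_int n\<bar> < 1" using w k by (simp add: abs_mult)
  hence "n = 0" by linarith
  thus ?thesis using re im by (simp add: complex_eq_iff)
qed

lemma contour_integral_rectpath_cot:
  fixes f :: "complex \<Rightarrow> complex" and a k \<rho> :: real
  defines "z1 \<equiv> Complex (a - k/2) (-\<rho>)" and "z2 \<equiv> Complex (a + k/2) \<rho>"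
      and "u \<equiv> \<lambda>w. of_real pi * (w - of_real a) / of_real k"
  assumes holo: "f holomorphic_on S" and "open S" "convex S" and box: "cbox z1 z2 \<subseteq> S"
      and k: "k > 0" and \<rho>: "\<rho> > 0" and nz: "f (of_real a) \<noteq> 0"
  shows "contour_integral (rectpath z1 z2) (\<lambda>w. f w * (of_real pi * cos (u w) / sin (u w)))
           = 2 * pi * \<i> * (of_real k * f (of_real a))"
proof -
  define S' where "S' = S \<inter> {w. Re w > a - 3*k/4} \<inter> {w. Re w < a + 3*k/4}"
  define g where "g = (\<lambda>w. sin (u w))"
  define F where "F = (\<lambda>w. f w * of_real pi * cos (u w) / g w)"
  have open': "open S'" unfolding S'_def
    by (intro open_Int \<open>open S\<close> open_halfspace_Re_gt open_halfspace_Re_lt)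
  have conn': "connected S'" unfolding S'_def
    by (intro convex_connected convex_Int \<open>convex S\<close> convex_halfspace_Re_gt convex_halfspace_Re_lt)
  have ord: "Re z1 \<le> Re z2" "Im z1 \<le> Im z2" using k \<rho> by (auto simp: z1_def z2_def)
  have box': "cbox z1 z2 \<subseteq> S'"
    using box k by (auto simp: S'_def z1_def z2_def in_cbox_complex_iff)
  have a_box: "of_real a \<in> box z1 z2" using k \<rho> by (auto simp: z1_def z2_def in_box_complex_iff)
  hence aS: "of_real a \<in> S'" using box' box_subset_cbox by blast
  have fholo: "(\<lambda>w. f w * of_real pi * cos (u w)) holomorphic_on S'"
    using k holomorphic_on_subset[OF holo, of S'] by (auto intro!: holomorphic_intros simp: u_def S'_def)
  have gholo: "g holomorphic_on S'" unfolding g_def u_def using k by (intro holomorphic_intros) auto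
  have gz: "w = of_real a" if wS: "w \<in> S'" and g0: "g w = 0" for w
  proof (rule sin_scaled_eq_0_imp[OF k _ g0[unfolded g_def u_def]])
    have "a - 3*k/4 < Re w" "Re w < a + 3*k/4" using wS by (auto simp: S'_def)
    thus "\<bar>Re w - a\<bar> < k" using k by linarith
  qed
  have Fholo: "F holomorphic_on S' - {of_real a}" unfolding F_def
    by (intro holomorphic_on_divide holomorphic_on_subset[OF fholo] holomorphic_on_subset[OF gholo])
       (use gz in auto)
  have gder: "(g has_field_derivative (of_real pi / of_real k)) (at (of_real a))"
  proof -
    have "(g has_field_derivative (cos (u (of_real a)) * (of_real pi / of_real k))) (at (of_real a))"
      unfolding g_def u_def using k by (auto intro!: derivative_eq_intros simp: field_simps)
    thus ?thesis by (simp add: u_def)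
  qed
  have "residue F (of_real a) = f (of_real a) * of_real pi / (of_real pi / of_real k)"
    unfolding F_def using nz k
    by (subst residue_simple_pole_deriv[OF fholo gholo open' conn' aS gder]) (auto simp: g_def u_def)
  hence res: "residue F (of_real a) = of_real k * f (of_real a)" using k by (simp add: field_simps)
  have pimg: "path_image (rectpath z1 z2) \<subseteq> S' - {of_real a}"
    using path_image_rectpath_cbox_minus_box[OF ord] box' a_box by auto
  have wind_out: "\<forall>z. z \<notin> S' \<longrightarrow> winding_number (rectpath z1 z2) z = 0"
    using winding_number_rectpath_outside[OF ord] box' by blast
  have "contour_integral (rectpath z1 z2) F =
          2 * pi * \<i> * (\<Sum>p\<in>{of_real a}. winding_number (rectpath z1 z2) p * residue F p)"
    by (rule Residue_theorem[OF open' conn' _ Fholo valid_path_rectpath _ pimg wind_out]) auto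
  also have "\<dots> = 2 * pi * \<i> * (of_real k * f (of_real a))"
    using winding_number_rectpath[OF a_box] res by simp
  finally show ?thesis by (simp add: F_def g_def mult.assoc)
qed

lemma norm_pi_cot_scaled_near_sgn:
  fixes w :: complex and a k \<rho> :: real
  defines "u \<equiv> of_real pi * (w - of_real a) / of_real k"
  assumes k: "k > 0" and \<rho>: "k \<le> 2 * pi * \<rho>" and w: "\<bar>Im w\<bar> = \<rho>"
  shows "sin u \<noteq> 0"
    and "cmod (of_real pi * cos u / sin u + of_real (sgn (Im w)) * (\<i> * of_real pi))
           \<le> 4 * pi * exp (-2 * pi * \<rho> / k)"
proof -
  have "Im u = pi * Im w / k" by (simp add: u_def Im_divide power2_eq_square)
  hence im: "\<bar>Im u\<bar> = pi * \<rho> / k" "sgn (Im u) = sgn (Im w)" using w k by (simp_all add: abs_mult sgn_mult)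
  have "1 \<le> 2 * (pi * \<rho> / k)" using k \<rho> by (simp add: field_simps)
  note cot = norm_cot_plus_sgn_i_le[OF im(1) this]
  thus "sin u \<noteq> 0" by blast
  have "of_real pi * cos u / sin u + of_real (sgn (Im w)) * (\<i> * of_real pi)
        = of_real pi * (cos u / sin u + of_real (sgn (Im u)) * \<i>)"
    using im(2) by (simp add: algebra_simps)
  thus "cmod (of_real pi * cos u / sin u + of_real (sgn (Im w)) * (\<i> * of_real pi))
          \<le> 4 * pi * exp (-2 * pi * \<rho> / k)"
    using cot(2) by (simp add: norm_mult mult.assoc)
qed

lemma periodic_horizontal_integral_eq_real:
  fixes f :: "complex \<Rightarrow> complex"
  assumes holo: "f holomorphic_on S" and "convex S"
      and box: "cbox (Complex (a - k/2) (-\<rho>)) (Complex (a + k/2) \<rho>) \<subseteq> S" and "0 \<le> k"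
      and per: "\<And>w. w \<in> cbox (Complex (a - k/2) (-\<rho>)) (Complex (a + k/2) \<rho>) \<Longrightarrow> Re w = a - k/2 \<Longrightarrow>
                  f (w + of_real k) = f w"
      and y: "\<bar>y\<bar> \<le> \<rho>"
  shows "contour_integral (linepath (Complex (a - k/2) y) (Complex (a + k/2) y)) f =
         contour_integral (linepath (of_real (a - k/2)) (of_real (a + k/2))) f"
proof -
  have shift: "contour_integral (linepath (Complex (a - k/2) y1) (Complex (a - k/2 + k) y1)) f =
               contour_integral (linepath (Complex (a - k/2) y2) (Complex (a - k/2 + k) y2)) f"
    if "-\<rho> \<le> y1" "y1 \<le> y2" "y2 \<le> \<rho>" for y1 y2
  proof (rule periodic_horizontal_integrals_eq[OF holo \<open>convex S\<close> _ \<open>0 \<le> k\<close> \<open>y1 \<le> y2\<close>])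
    show "cbox (Complex (a - k/2) y1) (Complex (a - k/2 + k) y2) \<subseteq> S"
      using box that by (auto simp: in_cbox_complex_iff)
    show "f (w + of_real k) = f w" if "w \<in> closed_segment (Complex (a - k/2) y1) (Complex (a - k/2) y2)" for w
      using that \<open>-\<rho> \<le> y1\<close> \<open>y1 \<le> y2\<close> \<open>y2 \<le> \<rho>\<close> \<open>0 \<le> k\<close>
      by (intro per) (auto simp: in_cbox_complex_iff closed_segment_same_Re closed_segment_eq_real_ivl split: if_splits)
  qed
  have "a - k/2 + k = a + k/2" "Complex (a - k/2) 0 = of_real (a - k/2)" "Complex (a + k/2) 0 = of_real (a + k/2)"
    by (simp_all add: complex_eq_iff)
  note shift = shift[unfolded this(1)]
  have "contour_integral (linepath (Complex (a - k/2) y) (Complex (a + k/2) y)) f =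
        contour_integral (linepath (Complex (a - k/2) 0) (Complex (a + k/2) 0)) f"
    using shift[of y 0] shift[of 0 y] y by (cases "y \<le> 0") auto
  thus ?thesis unfolding \<open>Complex (a - k/2) 0 = _\<close> \<open>Complex (a + k/2) 0 = _\<close> .
qed

lemma contour_integral_cot_horizontal_side:
  fixes f :: "complex \<Rightarrow> complex" and a k \<rho> y :: real
  defines "u \<equiv> \<lambda>w. of_real pi * (w - of_real a) / of_real k"
  assumes k: "k > 0" and \<rho>: "k \<le> 2 * pi * \<rho>"
      and f: "continuous_on (closed_segment p q) f" "\<And>w. w \<in> closed_segment p q \<Longrightarrow> cmod (f w) \<le> M"
      and y: "Im p = y" "Im q = y" "\<bar>y\<bar> = \<rho>"
  shows "cmod (contour_integral (linepath p q) (\<lambda>w. f w * (of_real pi * cos (u w) / sin (u w))) -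
               (- of_real (sgn y) * (\<i> * of_real pi)) * contour_integral (linepath p q) f)
         \<le> M * (4 * pi * exp (-2 * pi * \<rho> / k)) * cmod (q - p)"
proof (rule contour_integral_mult_approx_const[OF f(1) _ f(2)])
  have im: "\<bar>Im w\<bar> = \<rho>" "sgn (Im w) = sgn y" if "w \<in> closed_segment p q" for w
    using that y by (auto simp: closed_segment_same_Im)
  show "continuous_on (closed_segment p q) (\<lambda>w. of_real pi * cos (u w) / sin (u w))"
    unfolding u_def using norm_pi_cot_scaled_near_sgn(1)[OF k \<rho> im(1)] k
    by (intro continuous_intros) auto
  show "cmod (of_real pi * cos (u w) / sin (u w) - - of_real (sgn y) * (\<i> * of_real pi))
          \<le> 4 * pi * exp (-2 * pi * \<rho> / k)" if "w \<in> closed_segment p q" for w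
    using norm_pi_cot_scaled_near_sgn(2)[OF k \<rho> im(1)[OF that]] im(2)[OF that] by (simp add: u_def)
qed

theorem periodic_trapezoid_error:
  fixes f :: "complex \<Rightarrow> complex" and a k \<rho> M :: real
  defines "z1 \<equiv> Complex (a - k/2) (-\<rho>)" and "z2 \<equiv> Complex (a + k/2) \<rho>"
  assumes holo: "f holomorphic_on S" and "open S" "convex S" and box: "cbox z1 z2 \<subseteq> S"
      and k: "k > 0" and \<rho>: "k \<le> 2 * pi * \<rho>"
      and per: "\<And>w. w \<in> cbox z1 z2 \<Longrightarrow> Re w = a - k/2 \<Longrightarrow> f (w + of_real k) = f w"
      and bound: "\<And>w. w \<in> cbox z1 z2 \<Longrightarrow> cmod (f w) \<le> M"
      and nz: "f (of_real a) \<noteq> 0"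
  shows "cmod (of_real k * f (of_real a) -
           contour_integral (linepath (of_real (a - k/2)) (of_real (a + k/2))) f)
         \<le> 4 * k * M * exp (-2 * pi * \<rho> / k)"
proof -
  define u where "u = (\<lambda>w. of_real pi * (w - of_real a) / of_real k :: complex)"
  define g where "g = (\<lambda>w. of_real pi * cos (u w) / sin (u w))"
  define F where "F = (\<lambda>w. f w * g w)"
  define \<delta> where "\<delta> = 4 * pi * exp (-2 * pi * \<rho> / k)"
  define b2 where "b2 = Complex (a + k/2) (-\<rho>)"
  define b4 where "b4 = Complex (a - k/2) \<rho>"
  define R where "R = contour_integral (linepath (of_real (a - k/2)) (of_real (a + k/2))) f"
  have "0 < 2 * pi * \<rho>" using k \<rho> by linarith
  hence \<rho>0: "\<rho> > 0" by (simp add: zero_less_mult_iff)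
  have ord: "Re z1 \<le> Re z2" "Im z1 \<le> Im z2" using k \<rho>0 by (auto simp: z1_def z2_def)
  have corners: "Complex (Re z2) (Im z1) = b2" "Complex (Re z1) (Im z2) = b4"
    by (simp_all add: z1_def z2_def b2_def b4_def)
  note sides = path_image_rectpath_sides[of z1 z2, unfolded corners]
  have a_box: "of_real a \<in> box z1 z2" using k \<rho>0 by (auto simp: z1_def z2_def in_box_complex_iff)
  have img: "path_image (rectpath z1 z2) \<subseteq> cbox z1 z2 - {of_real a}"
    using path_image_rectpath_cbox_minus_box[OF ord] a_box by auto
  have sin_nz: "sin (u w) \<noteq> 0" if "w \<in> path_image (rectpath z1 z2)" for w
  proof
    assume "sin (u w) = 0"
    moreover have "\<bar>Re w - a\<bar> < k" using that img k by (auto simp: z1_def z2_def in_cbox_complex_iff abs_less_iff)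
    ultimately have "w = of_real a" using sin_scaled_eq_0_imp[OF k] unfolding u_def by blast
    thus False using that img by blast
  qed
  have contf: "continuous_on (cbox z1 z2) f"
    by (rule holomorphic_on_imp_continuous_on[OF holomorphic_on_subset[OF holo box]])
  have contF: "continuous_on (path_image (rectpath z1 z2)) F"
    unfolding F_def g_def u_def using continuous_on_subset[OF contf] img sin_nz k
    by (intro continuous_intros) (auto simp: u_def)
  have "2 * pi * \<i> * (of_real k * f (of_real a)) = contour_integral (rectpath z1 z2) F"
    unfolding F_def g_def u_def z1_def z2_def
    by (rule contour_integral_rectpath_cot[symmetric, OF holo \<open>open S\<close> \<open>convex S\<close>])
       (use box k \<rho>0 nz in \<open>simp_all add: z1_def z2_def\<close>)
  also have "\<dots> = contour_integral (linepath z1 b2) F + contour_integral (linepath b2 z2) F +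
      contour_integral (linepath z2 b4) F + contour_integral (linepath b4 z1) F"
    using contour_integral_rectpath_sides[OF contF] unfolding corners .
  also have "contour_integral (linepath b2 z2) F = - contour_integral (linepath b4 z1) F"
  proof -
    \<comment> \<open>\<open>F\<close> is \<open>k\<close>-periodic: \<open>f\<close> is, and \<open>cot\<close> has period \<open>\<pi>\<close>\<close>
    have "F (w + of_real k) = F w" if "w \<in> closed_segment z1 b4" for w
    proof -
      have "closed_segment z1 b4 \<subseteq> cbox z1 z2"
        using sides path_image_rectpath_subset_cbox[OF ord] closed_segment_commute[of z1 b4] by blast
      moreover have "Re w = a - k/2" using that by (simp add: z1_def b4_def closed_segment_same_Re)
      moreover have "u (w + of_real k) = u w + of_real pi" using k by (simp add: u_def field_simps)
      moreover have "cos (z + of_real pi) = - cos z" "sin (z + of_real pi) = - sin z" for z :: complex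
        by (simp_all add: cos_add sin_add cos_of_real sin_of_real)
      ultimately show ?thesis using that by (simp add: F_def g_def per subsetD)
    qed
    hence "contour_integral (linepath (z1 + of_real k) (b4 + of_real k)) F + contour_integral (linepath b4 z1) F = 0"
      using continuous_on_subset[OF contF] sides closed_segment_commute[of b4 z1]
      by (intro contour_integral_periodic_sides_cancel) auto
    moreover have "z1 + of_real k = b2" "b4 + of_real k = z2"
      by (simp_all add: z1_def b2_def b4_def z2_def complex_eq_iff)
    ultimately show ?thesis by (simp add: eq_neg_iff_add_eq_0)
  qed
  finally have total: "2 * pi * \<i> * (of_real k * f (of_real a)) =
      contour_integral (linepath z1 b2) F + contour_integral (linepath z2 b4) F" by simp
  have side: "cmod (contour_integral (linepath p q) F - c * contour_integral (linepath p q) f) \<le> M * \<delta> * k"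
    if pq: "closed_segment p q \<subseteq> path_image (rectpath z1 z2)" "Im p = y" "Im q = y" "cmod (q - p) = k"
      and y: "\<bar>y\<bar> = \<rho>" and c: "c = - of_real (sgn y) * (\<i> * of_real pi)" for p q y c
  proof -
    have pq_box: "closed_segment p q \<subseteq> cbox z1 z2"
      using pq(1) path_image_rectpath_subset_cbox[OF ord] by blast
    have "cmod (contour_integral (linepath p q) F - c * contour_integral (linepath p q) f) \<le> M * \<delta> * cmod (q - p)"
      unfolding F_def g_def u_def \<delta>_def c
    proof (rule contour_integral_cot_horizontal_side[OF k \<rho> continuous_on_subset[OF contf pq_box] _ pq(2,3) y])
      show "cmod (f w) \<le> M" if "w \<in> closed_segment p q" for w using bound pq_box that by blast
    qed
    thus ?thesis using pq(4) by simp
  qed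
  have bot: "cmod (contour_integral (linepath z1 b2) F - (\<i> * of_real pi) * R) \<le> M * \<delta> * k"
    using side[of z1 b2 "-\<rho>" "\<i> * of_real pi"] sides \<rho>0 k
          periodic_horizontal_integral_eq_real[OF holo \<open>convex S\<close>, of a k \<rho> "-\<rho>"] box per
    by (force simp: z1_def z2_def b2_def R_def complex_eq_iff cmod_def)
  have "contour_integral (linepath z2 b4) f = - contour_integral (linepath b4 z2) f"
    using continuous_on_subset[OF contf] sides path_image_rectpath_subset_cbox[OF ord]
    by (intro contour_integral_reverse_linepath) blast
  hence top: "cmod (contour_integral (linepath z2 b4) F - (- \<i> * of_real pi) * (- R)) \<le> M * \<delta> * k"
    using side[of z2 b4 \<rho> "- \<i> * of_real pi"] sides \<rho>0 k
          periodic_horizontal_integral_eq_real[OF holo \<open>convex S\<close>, of a k \<rho> \<rho>] box per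
    by (force simp: z1_def z2_def b4_def R_def complex_eq_iff cmod_def)
  define E1 where "E1 = contour_integral (linepath z1 b2) F - (\<i> * of_real pi) * R"
  define E3 where "E3 = contour_integral (linepath z2 b4) F - (- \<i> * of_real pi) * (- R)"
  have "of_real k * f (of_real a) - R = (E1 + E3) / (2 * pi * \<i>)"
    using total by (simp add: E1_def E3_def field_simps)
  hence "cmod (of_real k * f (of_real a) - R) = cmod (E1 + E3) / (2 * pi)"
    by (simp add: norm_divide norm_mult)
  also have "\<dots> \<le> (M * \<delta> * k + M * \<delta> * k) / (2 * pi)"
    using norm_triangle_le[OF add_mono[OF bot top]] by (intro divide_right_mono) (simp_all add: E1_def E3_def)
  also have "\<dots> = 4 * k * M * exp (-2 * pi * \<rho> / k)" by (simp add: \<delta>_def field_simps)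
  finally show ?thesis unfolding R_def .
qed

section \<open>The Balakrishnan kernel and its periodisation\<close>

text \<open>\<open>bkernel b (y + ln lam / 2) = lam powr b * exp (2*b*y) / (1 + exp (2*y) * lam)\<close> is the
  integrand of Balakrishnan's formula for \<open>lam powr (-b)\<close>; \<open>pkernel b k\<close> is its \<open>k\<close>-periodisation
  \<open>\<Sum>n\<in>\<int>. bkernel b (x + n * k)\<close>, with the terms for \<open>n\<close> and \<open>-n-1\<close> grouped.\<close>

definition bkernel :: "real \<Rightarrow> real \<Rightarrow> real" where
  "bkernel b x = exp (2*b*x) / (1 + exp (2*x))"

definition pkernel :: "real \<Rightarrow> real \<Rightarrow> real \<Rightarrow> real" where
  "pkernel b k x = (\<Sum>n. bkernel b (x + real n * k) + bkernel b (x - real (Suc n) * k))"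

definition bkernel_c :: "real \<Rightarrow> complex \<Rightarrow> complex" where
  "bkernel_c b z = exp (of_real (2*b) * z) / (1 + exp (2*z))"

definition bkernel_majorant :: "real \<Rightarrow> real \<Rightarrow> real" where
  "bkernel_majorant b x = min (exp (2*b*x)) (exp (2*(b-1)*x))"

lemma cos_ge_minus_half:
  fixes y :: real assumes "\<bar>y\<bar> \<le> 2*pi/3" shows "cos y \<ge> -1/2"
proof -
  have "cos \<bar>y\<bar> \<ge> cos (2*pi/3)"
    using assms by (intro cos_monotone_0_pi_le) auto
  moreover have "cos (2*pi/3) = -1/2"
  proof -
    have "cos (2*pi/3) = cos (pi - pi/3)" by (simp add: field_simps)
    also have "\<dots> = - cos (pi/3)" by (simp only: cos_pi_minus)
    finally show ?thesis by (simp add: cos_60)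
  qed
  moreover have "cos \<bar>y\<bar> = cos y" by (simp add: abs_if)
  ultimately show ?thesis by simp
qed

lemma norm_one_plus_exp_ge:
  fixes z :: complex assumes "\<bar>Im z\<bar> \<le> pi/3"
  shows "cmod (1 + exp (2*z)) \<ge> max 1 (exp (2 * Re z)) / 2"
proof -
  define t where "t = exp (2 * Re z)"
  have t: "t > 0" by (simp add: t_def)
  have c: "cos (2 * Im z) \<ge> -1/2" using assms by (intro cos_ge_minus_half) auto
  have re: "Re (exp (2*z)) = t * cos (2 * Im z)" and im: "Im (exp (2*z)) = t * sin (2*Im z)"
    by (simp_all add: t_def Re_exp Im_exp)
  have sq: "\<And>c s. s^2 + c^2 = 1 \<Longrightarrow> (1 + t * c)^2 + (t * s)^2 = 1 + 2*t*c + t^2"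
  proof -
    fix c s :: real assume h: "s^2 + c^2 = 1"
    have "(1 + t * c)^2 + (t * s)^2 = 1 + 2*t*c + t^2 * (s^2 + c^2)"
      by (simp add: power2_eq_square algebra_simps)
    thus "(1 + t * c)^2 + (t * s)^2 = 1 + 2*t*c + t^2" using h by simp
  qed
  have "(cmod (1 + exp (2*z)))^2 = (1 + t * cos (2 * Im z))^2 + (t * sin (2*Im z))^2"
    by (simp add: cmod_power2 re im)
  also have "\<dots> = 1 + 2*t*cos (2*Im z) + t^2"
    by (rule sq) (rule sin_cos_squared_add)
  finally have eq: "(cmod (1 + exp (2*z)))^2 = 1 + 2*t*cos (2*Im z) + t^2" .
  have "t * (-1/2) \<le> t * cos (2*Im z)" using c t by (intro mult_left_mono) auto
  hence "2*t*cos (2*Im z) \<ge> -t" by simp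
  hence ge: "(cmod (1 + exp (2*z)))^2 \<ge> 1 - t + t^2" using eq by simp
  have "(max 1 t / 2)^2 \<le> 1 - t + t^2"
  proof (cases "t \<le> 1")
    case True
    have "0 \<le> (t-1/2)^2" by simp
    moreover have "(t-1/2)^2 = t^2 - t + 1/4" by (simp add: power2_eq_square algebra_simps)
    moreover have "(max 1 t / 2)^2 = 1/4" using True by (simp add: max_def power2_eq_square)
    ultimately show ?thesis by linarith
  next
    case False
    have "0 \<le> (t-2/3)^2" by simp
    moreover have "(t-2/3)^2 = t^2 - 4/3*t + 4/9" by (simp add: power2_eq_square algebra_simps)
    moreover have "(max 1 t / 2)^2 = t^2/4" using False by (simp add: max_def power2_eq_square)
    ultimately show ?thesis by linarith
  qed
  hence "(max 1 t / 2)^2 \<le> (cmod (1 + exp (2*z)))^2" using ge by linarith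
  hence "max 1 t / 2 \<le> cmod (1 + exp (2*z))"
    by (rule power2_le_imp_le) simp
  thus ?thesis by (simp add: t_def)
qed

lemma norm_bkernel_c_le_majorant:
  assumes "\<bar>Im z\<bar> \<le> pi/3"
  shows "cmod (bkernel_c b z) \<le> 2 * bkernel_majorant b (Re z)"
proof -
  have d: "cmod (1 + exp (2*z)) \<ge> max 1 (exp (2 * Re z)) / 2"
    by (rule norm_one_plus_exp_ge[OF assms])
  have pos: "max 1 (exp (2 * Re z)) / 2 > 0" by simp
  have "cmod (bkernel_c b z) = exp (2*b*Re z) / cmod (1 + exp (2*z))"
    by (simp add: bkernel_c_def norm_divide)
  also have "\<dots> \<le> exp (2*b*Re z) / (max 1 (exp (2 * Re z)) / 2)"
  proof (rule divide_left_mono[OF d])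
    show "0 < cmod (1 + exp (2*z)) * (max 1 (exp (2 * Re z)) / 2)"
      using pos d by (intro mult_pos_pos) linarith+
  qed simp
  also have "\<dots> = 2 * (exp (2*b*Re z) / max 1 (exp (2 * Re z)))" by simp
  also have "exp (2*b*Re z) / max 1 (exp (2 * Re z)) = bkernel_majorant b (Re z)"
  proof -
    have "exp (2*b*Re z) / exp (2 * Re z) = exp (2*(b-1)*Re z)"
      by (simp add: exp_diff[symmetric] algebra_simps)
    moreover have "(exp (2*b*Re z) / max 1 (exp (2 * Re z))) = min (exp (2*b*Re z)) (exp (2*b*Re z) / exp (2 * Re z))"
      by (auto simp: max_def min_def divide_le_eq_1 field_simps)
    ultimately show ?thesis by (simp add: bkernel_majorant_def)
  qed
  finally show ?thesis .
qed

lemma bkernel_majorant_shift_le: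
  assumes "0 < b" "b < 1"
  shows "bkernel_majorant b (x + t) \<le> exp (2*\<bar>x\<bar>) * bkernel_majorant b t"
proof -
  have 1: "exp (2*b*(x+t)) \<le> exp (2*\<bar>x\<bar>) * exp (2*b*t)"
  proof -
    have "b*x \<le> b*\<bar>x\<bar>" using assms by (intro mult_left_mono) auto
    also have "\<dots> \<le> \<bar>x\<bar>" using assms by (intro mult_left_le_one_le) auto
    finally have "2*b*(x+t) \<le> 2*\<bar>x\<bar> + 2*b*t" by (simp add: algebra_simps)
    thus ?thesis by (simp add: exp_add[symmetric])
  qed
  have 2: "exp (2*(b-1)*(x+t)) \<le> exp (2*\<bar>x\<bar>) * exp (2*(b-1)*t)"
  proof -
    have "(b-1)*x \<le> (1-b)*\<bar>x\<bar>"
    proof (cases "x \<ge> 0")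
      case True
      have "(b-1)*x \<le> 0" using assms True by (intro mult_nonpos_nonneg) auto
      moreover have "0 \<le> (1-b)*\<bar>x\<bar>" using assms by simp
      ultimately show ?thesis by linarith
    next
      case False
      hence "\<bar>x\<bar> = -x" by simp
      thus ?thesis by (simp add: algebra_simps)
    qed
    also have "\<dots> \<le> \<bar>x\<bar>" using assms by (intro mult_left_le_one_le) auto
    finally have "(b-1)*x \<le> \<bar>x\<bar>" .
    hence "2*(b-1)*(x+t) \<le> 2*\<bar>x\<bar> + 2*(b-1)*t" by (simp add: algebra_simps)
    thus ?thesis by (simp add: exp_add[symmetric])
  qed
  have "min (exp (2*b*(x+t))) (exp (2*(b-1)*(x+t))) \<le> min (exp (2*\<bar>x\<bar>) * exp (2*b*t)) (exp (2*\<bar>x\<bar>) * exp (2*(b-1)*t))"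
    using 1 2 by (rule min.mono)
  also have "\<dots> = exp (2*\<bar>x\<bar>) * min (exp (2*b*t)) (exp (2*(b-1)*t))"
    by (simp add: min_mult_distrib_left)
  finally show ?thesis unfolding bkernel_majorant_def .
qed

definition pkernel_term_c :: "real \<Rightarrow> real \<Rightarrow> complex \<Rightarrow> nat \<Rightarrow> complex" where
  "pkernel_term_c b k z n = bkernel_c b (z + of_real (real n * k)) + bkernel_c b (z - of_real (real (Suc n) * k))"

definition pkernel_c :: "real \<Rightarrow> real \<Rightarrow> complex \<Rightarrow> complex" where
  "pkernel_c b k z = (\<Sum>n. pkernel_term_c b k z n)"

lemma norm_bkernel_c_shift_right:
  assumes b: "0 < b" "b < 1" and k: "k > 0" and im: "\<bar>Im z\<bar> \<le> pi/3"
  shows "cmod (bkernel_c b (z + of_real (real n * k))) \<le> 2 * exp (2*\<bar>Re z\<bar>) * exp (-2*(1-b)*k) ^ n"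
proof -
  have "cmod (bkernel_c b (z + of_real (real n * k))) \<le> 2 * bkernel_majorant b (Re z + real n * k)"
    using norm_bkernel_c_le_majorant[of "z + of_real (real n * k)" b] im by simp
  also have "bkernel_majorant b (Re z + real n * k) \<le> exp (2*\<bar>Re z\<bar>) * bkernel_majorant b (real n * k)"
    by (rule bkernel_majorant_shift_le[OF b])
  also have "bkernel_majorant b (real n * k) \<le> exp (2*(b-1)*(real n * k))" by (simp add: bkernel_majorant_def)
  also have "exp (2*(b-1)*(real n * k)) = exp (-2*(1-b)*k) ^ n"
    by (simp add: exp_of_nat_mult[symmetric] algebra_simps)
  finally show ?thesis by (simp add: mult_left_mono)
qed

lemma norm_bkernel_c_shift_left:
  assumes b: "0 < b" "b < 1" and k: "k > 0" and im: "\<bar>Im z\<bar> \<le> pi/3"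
  shows "cmod (bkernel_c b (z - of_real (real (Suc n) * k))) \<le> 2 * exp (2*\<bar>Re z\<bar>) * exp (-2*b*k) ^ Suc n"
proof -
  have "cmod (bkernel_c b (z - of_real (real (Suc n) * k))) \<le> 2 * bkernel_majorant b (Re (z - of_real (real (Suc n) * k)))"
    using norm_bkernel_c_le_majorant[of "z - of_real (real (Suc n) * k)" b] im by simp
  also have "Re (z - of_real (real (Suc n) * k)) = Re z + (- real (Suc n) * k)" by (simp add: algebra_simps)
  also have "bkernel_majorant b (Re z + (- real (Suc n) * k)) \<le> exp (2*\<bar>Re z\<bar>) * bkernel_majorant b (- real (Suc n) * k)"
    by (rule bkernel_majorant_shift_le[OF b])
  also have "bkernel_majorant b (- real (Suc n) * k) \<le> exp (2*b*(- real (Suc n) * k))" by (simp add: bkernel_majorant_def)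
  also have "exp (2*b*(- real (Suc n) * k)) = exp (-2*b*k) ^ Suc n"
    by (simp only: exp_of_nat_mult[symmetric]) (simp add: algebra_simps)
  finally show ?thesis by (simp add: mult_left_mono)
qed

lemma norm_exp_rates_lt_1:
  fixes b k :: real assumes "0 < b" "b < 1" "0 < k"
  shows "norm (exp (-2*(1-b)*k)) < 1" "norm (exp (-2*b*k)) < 1"
  using assms by (simp_all add: mult_pos_pos mult_neg_pos)

lemma norm_pkernel_term_c_le:
  assumes b: "0 < b" "b < 1" and k: "k > 0" and im: "\<bar>Im z\<bar> \<le> pi/3"
  shows "cmod (pkernel_term_c b k z n) \<le> 2 * exp (2*\<bar>Re z\<bar>) * (exp (-2*(1-b)*k) ^ n + exp (-2*b*k) ^ Suc n)"
proof -
  have "cmod (pkernel_term_c b k z n) \<le> cmod (bkernel_c b (z + of_real (real n * k))) + cmod (bkernel_c b (z - of_real (real (Suc n) * k)))"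
    unfolding pkernel_term_c_def by (rule norm_triangle_ineq)
  also have "\<dots> \<le> 2 * exp (2*\<bar>Re z\<bar>) * exp (-2*(1-b)*k) ^ n + 2 * exp (2*\<bar>Re z\<bar>) * exp (-2*b*k) ^ Suc n"
    by (intro add_mono norm_bkernel_c_shift_right norm_bkernel_c_shift_left assms)
  finally show ?thesis by (simp add: algebra_simps)
qed

lemma summable_two_geometric:
  fixes b k C :: real
  assumes b: "0 < b" "b < 1" and k: "k > 0"
  shows "summable (\<lambda>n. C * (exp (-2*(1-b)*k) ^ n + exp (-2*b*k) ^ Suc n))"
proof -
  have 1: "summable (\<lambda>n. exp (-2*(1-b)*k) ^ n)"
    by (intro summable_geometric norm_exp_rates_lt_1(1) assms)
  have 2: "summable (\<lambda>n. exp (-2*b*k) ^ Suc n)"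
    by (subst summable_Suc_iff) (intro summable_geometric norm_exp_rates_lt_1(2) assms)
  show ?thesis using 1 2 by (intro summable_mult summable_add)
qed

lemma summable_pkernel_term_c:
  assumes b: "0 < b" "b < 1" and k: "k > 0" and im: "\<bar>Im z\<bar> \<le> pi/3"
  shows "summable (\<lambda>n. pkernel_term_c b k z n)"
  by (rule summable_norm_cancel, rule summable_comparison_test[OF _ summable_two_geometric[OF b k]])
     (use norm_pkernel_term_c_le[OF b k im] in auto)

lemma summable_bkernel_c_shift_right:
  assumes b: "0 < b" "b < 1" and k: "k > 0" and im: "\<bar>Im z\<bar> \<le> pi/3"
  shows "summable (\<lambda>n. bkernel_c b (z + of_real (real n * k)))"
proof -
  have 1: "summable (\<lambda>n. 2 * exp (2*\<bar>Re z\<bar>) * exp (-2*(1-b)*k) ^ n)"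
    by (intro summable_mult summable_geometric norm_exp_rates_lt_1(1) assms)
  show ?thesis
    by (rule summable_norm_cancel, rule summable_comparison_test[OF _ 1])
       (use norm_bkernel_c_shift_right[OF b k im] in auto)
qed

lemma summable_bkernel_c_shift_left:
  assumes b: "0 < b" "b < 1" and k: "k > 0" and im: "\<bar>Im z\<bar> \<le> pi/3"
  shows "summable (\<lambda>n. bkernel_c b (z - of_real (real (Suc n) * k)))"
proof -
  have 1: "summable (\<lambda>n. 2 * exp (2*\<bar>Re z\<bar>) * exp (-2*b*k) ^ Suc n)"
    by (intro summable_mult, subst summable_Suc_iff, intro summable_geometric norm_exp_rates_lt_1(2) assms)
  show ?thesis
    by (rule summable_norm_cancel, rule summable_comparison_test[OF _ 1])
       (use norm_bkernel_c_shift_left[OF b k im] in auto)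
qed

lemma pkernel_c_periodic:
  assumes b: "0 < b" "b < 1" and k: "k > 0" and im: "\<bar>Im z\<bar> \<le> pi/3"
  shows "pkernel_c b k (z + of_real k) = pkernel_c b k z"
proof -
  define A where "A = (\<lambda>n. bkernel_c b (z + of_real (real n * k)))"
  define B where "B = (\<lambda>n. bkernel_c b (z - of_real (real (Suc n) * k)))"
  have sA: "summable A" unfolding A_def by (rule summable_bkernel_c_shift_right[OF assms])
  have sB: "summable B" unfolding B_def by (rule summable_bkernel_c_shift_left[OF assms])
  have P: "pkernel_c b k z = suminf A + suminf B"
    unfolding pkernel_c_def pkernel_term_c_def A_def[symmetric] B_def[symmetric]
    using sA sB by (subst suminf_add) (auto simp: A_def B_def)
  have e1: "bkernel_c b (z + of_real k + of_real (real n * k)) = A (Suc n)" for n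
    by (simp add: A_def algebra_simps)
  define B' where "B' = (\<lambda>n. bkernel_c b (z + of_real k - of_real (real (Suc n) * k)))"
  have e2: "B' (Suc n) = B n" for n by (simp add: B'_def B_def algebra_simps)
  have e3: "B' 0 = A 0" by (simp add: B'_def A_def)
  have sA': "summable (\<lambda>n. A (Suc n))" using sA by (subst summable_Suc_iff)
  have sB': "summable B'"
    using sB by (subst summable_Suc_iff[symmetric]) (simp add: e2)
  have fe: "(\<lambda>n. pkernel_term_c b k (z + of_real k) n) = (\<lambda>n. A (Suc n) + B' n)"
    by (rule ext) (simp only: pkernel_term_c_def e1 B'_def)
  have "pkernel_c b k (z + of_real k) = (\<Sum>n. A (Suc n)) + suminf B'"
    unfolding pkernel_c_def fe using sA' sB' by (rule suminf_add[symmetric])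
  also have "(\<Sum>n. A (Suc n)) = suminf A - A 0" by (rule suminf_split_head[OF sA])
  also have "suminf B' = (\<Sum>n. B' (Suc n)) + B' 0" by (rule suminf_split_initial_segment[OF sB', of 1, simplified])
  also have "(\<Sum>n. B' (Suc n)) = suminf B" by (simp add: e2)
  finally show ?thesis using P e3 by simp
qed

definition pkernel_domain :: "complex set" where "pkernel_domain = box (Complex (-1) (-pi/3)) (Complex 2 (pi/3))"

lemma mem_pkernel_domain: "z \<in> pkernel_domain \<longleftrightarrow> -1 < Re z \<and> Re z < 2 \<and> -pi/3 < Im z \<and> Im z < pi/3"
  by (simp add: pkernel_domain_def in_box_complex_iff)

lemma open_pkernel_domain: "open pkernel_domain" unfolding pkernel_domain_def by (rule open_box)
lemma convex_pkernel_domain: "convex pkernel_domain" by (simp add: pkernel_domain_def)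

lemma one_plus_exp_neq_zero: "\<bar>Im z\<bar> \<le> pi/3 \<Longrightarrow> 1 + exp (2*z) \<noteq> 0"
  using norm_one_plus_exp_ge[of z] by (auto simp: max_def split: if_splits)

lemma bkernel_c_shift_holomorphic:
  "(\<lambda>z. bkernel_c b (z + c)) holomorphic_on {z. \<bar>Im z\<bar> < pi/3 - \<bar>Im c\<bar>}"
proof -
  have "1 + exp (2*z + 2*c) \<noteq> 0" if "\<bar>Im z\<bar> < pi/3 - \<bar>Im c\<bar>" for z
  proof -
    have tri: "\<bar>Im z + Im c\<bar> \<le> \<bar>Im z\<bar> + \<bar>Im c\<bar>" by (rule abs_triangle_ineq)
    have "Im (z+c) = Im z + Im c" by simp
    hence "\<bar>Im (z+c)\<bar> \<le> pi/3" using tri that by linarith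
    from one_plus_exp_neq_zero[OF this] show ?thesis by (simp add: distrib_left)
  qed
  thus ?thesis unfolding bkernel_c_def
    by (intro holomorphic_intros) (auto simp: distrib_left)
qed

lemma pkernel_term_c_holomorphic:
  "(\<lambda>z. pkernel_term_c b k z n) holomorphic_on pkernel_domain"
proof -
  have 1: "(\<lambda>z. bkernel_c b (z + of_real (real n * k))) holomorphic_on pkernel_domain"
    by (rule holomorphic_on_subset[OF bkernel_c_shift_holomorphic]) (auto simp: mem_pkernel_domain)
  have 2: "(\<lambda>z. bkernel_c b (z + (- of_real (real (Suc n) * k)))) holomorphic_on pkernel_domain"
    by (rule holomorphic_on_subset[OF bkernel_c_shift_holomorphic]) (auto simp: mem_pkernel_domain)
  show ?thesis unfolding pkernel_term_c_def using holomorphic_on_add[OF 1 2] by simp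
qed

definition pkernel_term_majorant :: "real \<Rightarrow> real \<Rightarrow> nat \<Rightarrow> real" where
  "pkernel_term_majorant b k n = 2 * exp 4 * (exp (-2*(1-b)*k) ^ n + exp (-2*b*k) ^ Suc n)"

lemma norm_pkernel_term_c_le_majorant:
  assumes b: "0 < b" "b < 1" and k: "k > 0" and im: "\<bar>Im z\<bar> \<le> pi/3" and re: "\<bar>Re z\<bar> \<le> 2"
  shows "cmod (pkernel_term_c b k z n) \<le> pkernel_term_majorant b k n"
proof -
  have "cmod (pkernel_term_c b k z n) \<le> 2 * exp (2*\<bar>Re z\<bar>) * (exp (-2*(1-b)*k) ^ n + exp (-2*b*k) ^ Suc n)"
    by (rule norm_pkernel_term_c_le[OF b k im])
  also have "\<dots> \<le> 2 * exp 4 * (exp (-2*(1-b)*k) ^ n + exp (-2*b*k) ^ Suc n)"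
    using re by (intro mult_right_mono mult_left_mono) auto
  finally show ?thesis by (simp add: pkernel_term_majorant_def)
qed

lemma summable_pkernel_term_majorant: "0 < b \<Longrightarrow> b < 1 \<Longrightarrow> k > 0 \<Longrightarrow> summable (pkernel_term_majorant b k)"
  unfolding pkernel_term_majorant_def using summable_two_geometric[of b k "2 * exp 4"] by (simp add: mult.assoc)

lemma pkernel_c_holomorphic:
  assumes b: "0 < b" "b < 1" and k: "k > 0"
  shows "pkernel_c b k holomorphic_on pkernel_domain"
proof -
  have ul: "uniform_limit pkernel_domain (\<lambda>N z. \<Sum>n<N. pkernel_term_c b k z n) (\<lambda>z. \<Sum>n. pkernel_term_c b k z n) sequentially"
    by (rule Weierstrass_m_test[OF _ summable_pkernel_term_majorant[OF b k]])
       (rule norm_pkernel_term_c_le_majorant[OF b k], auto simp: mem_pkernel_domain)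
  show ?thesis unfolding pkernel_c_def
  proof (rule holomorphic_uniform_sequence[OF open_pkernel_domain])
    show "(\<lambda>z. \<Sum>n<N. pkernel_term_c b k z n) holomorphic_on pkernel_domain" for N
      by (intro holomorphic_on_sum pkernel_term_c_holomorphic)
    fix x assume "x \<in> pkernel_domain"
    then obtain d where d: "d > 0" "cball x d \<subseteq> pkernel_domain"
      using open_pkernel_domain open_contains_cball by blast
    show "\<exists>d>0. cball x d \<subseteq> pkernel_domain \<and> uniform_limit (cball x d) (\<lambda>N z. \<Sum>n<N. pkernel_term_c b k z n) (\<lambda>z. \<Sum>n. pkernel_term_c b k z n) sequentially"
      using d uniform_limit_on_subset[OF ul d(2)] by blast
  qed
qed

lemma geometric_tail_scaled_le:
  fixes c k :: real assumes "c > 0" "k > 0"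
  shows "k * (exp (-c*k) / (1 - exp (-c*k))) \<le> 1/c"
proof -
  have e: "exp (c*k) \<ge> 1 + c*k" by (rule exp_ge_add_one_self)
  have pos: "c*k > 0" using assms by simp
  have E: "exp (c*k) > 1" using pos e by linarith
  have "exp (-c*k) / (1 - exp (-c*k)) = 1 / (exp (c*k) - 1)"
    using E by (simp add: exp_minus field_simps)
  hence "k * (exp (-c*k) / (1 - exp (-c*k))) = k / (exp (c*k) - 1)" by simp
  also have "k / (exp (c*k) - 1) \<le> k / (c*k)"
  proof (rule divide_left_mono)
    show "c*k \<le> exp (c*k) - 1" using e by linarith
  qed (use assms pos in auto)
  also have "k / (c*k) = 1/c" using assms by simp
  finally show ?thesis .
qed

definition pkernel_const :: "real \<Rightarrow> real" where
  "pkernel_const b = 2 * exp 4 * (1 + 1/(2*(1-b)) + 1/(2*b))"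

lemma pkernel_term_majorant_suminf_le:
  assumes b: "0 < b" "b < 1" and k: "0 < k" "k \<le> 1"
  shows "k * suminf (pkernel_term_majorant b k) \<le> pkernel_const b"
proof -
  define c1 where "c1 = exp (-2*(1-b)*k)"
  define c2 where "c2 = exp (-2*b*k)"
  have c1: "norm c1 < 1" unfolding c1_def by (intro norm_exp_rates_lt_1(1) assms)
  have c2: "norm c2 < 1" unfolding c2_def by (intro norm_exp_rates_lt_1(2) assms)
  have s1: "(\<lambda>n. c1^n) sums (1/(1-c1))" using geometric_sums[OF c1] by simp
  have s2: "(\<lambda>n. c2^Suc n) sums (c2 * (1/(1-c2)))"
    using sums_mult[OF geometric_sums[OF c2], of c2] by simp
  have "pkernel_term_majorant b k sums (2 * exp 4 * (1/(1-c1) + c2 * (1/(1-c2))))"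
    unfolding pkernel_term_majorant_def c1_def[symmetric] c2_def[symmetric]
    by (intro sums_mult sums_add s1 s2)
  hence eq: "suminf (pkernel_term_majorant b k) = 2 * exp 4 * (1/(1-c1) + c2 * (1/(1-c2)))" by (rule sums_unique[symmetric])
  have b1: "k * (1/(1-c1)) \<le> k + 1/(2*(1-b))"
  proof -
    have "1/(1-c1) = 1 + c1/(1-c1)" using c1 by (simp add: field_simps)
    thus ?thesis using geometric_tail_scaled_le[of "2*(1-b)" k] b k
      unfolding c1_def by (simp add: distrib_left mult.assoc)
  qed
  have b2: "k * (c2 * (1/(1-c2))) \<le> 1/(2*b)"
    using geometric_tail_scaled_le[of "2*b" k] b k unfolding c2_def by (simp add: mult.assoc)
  have "k * suminf (pkernel_term_majorant b k) = 2 * exp 4 * (k * (1/(1-c1)) + k * (c2 * (1/(1-c2))))"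
    by (simp add: eq algebra_simps)
  also have "\<dots> \<le> 2 * exp 4 * (k + 1/(2*(1-b)) + 1/(2*b))"
    using b1 b2 by (intro mult_left_mono) auto
  also have "\<dots> \<le> pkernel_const b" unfolding pkernel_const_def using k by (intro mult_left_mono) auto
  finally show ?thesis .
qed

lemma norm_pkernel_c_le:
  assumes b: "0 < b" "b < 1" and k: "0 < k" "k \<le> 1"
    and im: "\<bar>Im z\<bar> \<le> pi/3" and re: "\<bar>Re z\<bar> \<le> 2"
  shows "k * cmod (pkernel_c b k z) \<le> pkernel_const b"
proof -
  have "cmod (pkernel_c b k z) \<le> suminf (pkernel_term_majorant b k)"
    unfolding pkernel_c_def by (rule norm_suminf_le[OF norm_pkernel_term_c_le_majorant[OF b k(1) im re] summable_pkernel_term_majorant[OF b k(1)]])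
  hence "k * cmod (pkernel_c b k z) \<le> k * suminf (pkernel_term_majorant b k)" using k by (intro mult_left_mono) auto
  also have "\<dots> \<le> pkernel_const b" by (rule pkernel_term_majorant_suminf_le[OF b k])
  finally show ?thesis .
qed

lemma bkernel_pos: "bkernel b x > 0"
  unfolding bkernel_def by (intro divide_pos_pos) (auto intro: add_pos_pos)

lemma bkernel_c_of_real: "bkernel_c b (of_real x) = of_real (bkernel b x)"
proof -
  have 1: "of_real (2*b) * of_real x = (of_real (2*b*x)::complex)" by simp
  have 2: "exp (of_real (2*b*x)) = (of_real (exp (2*b*x)) :: complex)" by (rule exp_of_real)
  have 3: "2 * (of_real x::complex) = of_real (2*x)" by simp
  have 4: "exp (of_real (2*x)) = (of_real (exp (2*x)) :: complex)" by (rule exp_of_real)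
  have 5: "1 + (of_real (exp (2*x))::complex) = of_real (1 + exp (2*x))" by simp
  show ?thesis unfolding bkernel_c_def bkernel_def 1 2 3 4 5 by (simp only: of_real_divide)
qed

lemma pkernel_term_c_of_real: "pkernel_term_c b k (of_real x) n = of_real (bkernel b (x + real n * k) + bkernel b (x - real (Suc n) * k))"
proof -
  have e1: "bkernel_c b (of_real x + of_real (real n * k)) = of_real (bkernel b (x + real n * k))"
    using bkernel_c_of_real[of b "x + real n * k"] by simp
  have e2: "bkernel_c b (of_real x - of_real (real (Suc n) * k)) = of_real (bkernel b (x - real (Suc n) * k))"
    using bkernel_c_of_real[of b "x - real (Suc n) * k"] by simp
  show ?thesis unfolding pkernel_term_c_def e1 e2 by simp
qed

lemma pkernel_c_of_real:
  assumes b: "0 < b" "b < 1" and k: "0 < k"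
  shows "pkernel_c b k (of_real x) = of_real (pkernel b k x)"
    and "summable (\<lambda>n. bkernel b (x + real n * k) + bkernel b (x - real (Suc n) * k))"
    and "pkernel b k x > 0"
proof -
  have s: "summable (\<lambda>n. pkernel_term_c b k (of_real x) n)" by (rule summable_pkernel_term_c[OF b k]) simp
  hence s': "summable (\<lambda>n. (of_real (bkernel b (x + real n * k) + bkernel b (x - real (Suc n) * k)) :: complex))"
    by (simp only: pkernel_term_c_of_real)
  thus sr: "summable (\<lambda>n. bkernel b (x + real n * k) + bkernel b (x - real (Suc n) * k))"
    by (simp only: summable_of_real_iff)
  show "pkernel_c b k (of_real x) = of_real (pkernel b k x)"
    unfolding pkernel_c_def pkernel_def pkernel_term_c_of_real by (rule suminf_of_real[OF sr, symmetric])
  show "pkernel b k x > 0" unfolding pkernel_def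
    by (rule suminf_pos[OF sr]) (intro add_pos_pos bkernel_pos)
qed

lemma continuous_on_bkernel: "continuous_on A (bkernel b)"
  unfolding bkernel_def by (intro continuous_intros) (auto intro: add_pos_pos simp: add_pos_pos[THEN less_imp_neq, symmetric])

lemma bkernel_logit_substitution:
  fixes b u :: real assumes u: "0 < u" "u < 1"
  shows "bkernel b ((ln u - ln (1-u))/2) * (1/(2*u*(1-u))) = u powr (b-1) * (1-u) powr ((1-b)-1) / 2"
proof -
  have lnd: "ln u - ln (1-u) = ln (u/(1-u))" using u by (simp add: ln_div)
  have p: "u/(1-u) > 0" using u by simp
  have e1: "exp (2*b*(ln (u/(1-u))/2)) = (u/(1-u)) powr b"
    using p u by (simp add: powr_def)
  have e2: "exp (2*(ln (u/(1-u))/2)) = u/(1-u)" using p by simp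
  have d: "1 + u/(1-u) = 1/(1-u)" using u by (simp add: field_simps)
  have "bkernel b (ln (u/(1-u))/2) = (u/(1-u)) powr b * (1-u)"
    unfolding bkernel_def e1 e2 d using u by simp
  also have "(u/(1-u)) powr b = u powr b / (1-u) powr b" using u by (simp add: powr_divide)
  finally have G: "bkernel b (ln (u/(1-u))/2) = u powr b / (1-u) powr b * (1-u)" .
  have 1: "u powr (b-1) = u powr b / u" using u by (simp add: powr_diff)
  have 2: "(1-u) powr ((1-b)-1) = 1 / (1-u) powr b" using u by (simp add: powr_minus_divide)
  have Q: "(1-u) powr b > 0" using u by simp
  show ?thesis unfolding lnd G 1 2 using u Q by (simp add: field_simps)
qed

lemma bkernel_interval_integral:
  fixes b :: real assumes b: "0 < b" "b < 1"
  shows "set_integrable lborel (einterval (-\<infinity>) \<infinity>) (bkernel b)"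
    and "(LBINT x=-\<infinity>..\<infinity>. bkernel b x) = Beta b (1-b) / 2"
proof -
  define g where "g = (\<lambda>u::real. (ln u - ln (1-u))/2)"
  define g' where "g' = (\<lambda>u::real. 1/(2*u*(1-u)))"
  define B where "B = (\<lambda>u::real. u powr (b-1) * (1-u) powr ((1-b)-1) / 2)"
  have deriv: "DERIV g x :> g' x" if "0 < ereal x" "ereal x < 1" for x
  proof -
    have x: "0 < x" "x < 1" using that by (auto simp: zero_ereal_def one_ereal_def)
    show ?thesis unfolding g_def g'_def using x
      by (auto intro!: derivative_eq_intros simp: field_simps power2_eq_square)
  qed
  have contf: "isCont (bkernel b) (g x)" for x
    using continuous_on_bkernel[of UNIV b] by (simp add: continuous_on_eq_continuous_at)
  have contg': "isCont g' x" if "0 < ereal x" "ereal x < 1" for x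
  proof -
    have x: "0 < x" "x < 1" using that by (auto simp: zero_ereal_def one_ereal_def)
    show ?thesis unfolding g'_def using x by (intro continuous_intros) auto
  qed
  have fnn: "0 \<le> bkernel b (g x)" for x using bkernel_pos[of b "g x"] by simp
  have g'nn: "0 \<le> g' x" if "0 \<le> ereal x" "ereal x \<le> 1" for x
  proof -
    have x: "0 \<le> x" "x \<le> 1" using that by (auto simp: zero_ereal_def one_ereal_def)
    show ?thesis unfolding g'_def using x by simp
  qed
  have A: "((ereal \<circ> g \<circ> real_of_ereal) \<longlongrightarrow> -\<infinity>) (at_right 0)"
  proof -
    have "filterlim g at_bot (at_right 0)" unfolding g_def by real_asymp
    thus ?thesis by (simp add: zero_ereal_def ereal_tendsto_simps)
  qed
  have Bl: "((ereal \<circ> g \<circ> real_of_ereal) \<longlongrightarrow> \<infinity>) (at_left 1)"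
  proof -
    have "filterlim g at_top (at_left 1)" unfolding g_def by real_asymp
    thus ?thesis by (simp add: one_ereal_def ereal_tendsto_simps)
  qed
  have intB: "set_integrable lborel (einterval 0 1) B"
  proof -
    have "set_integrable lborel {0..1} (\<lambda>t. t powr (b - 1) * (1 - t) powr ((1-b) - 1))"
      using integrable_Beta[of b "1-b"] b by simp
    hence "set_integrable lborel {0<..<1} (\<lambda>t. t powr (b - 1) * (1 - t) powr ((1-b) - 1))"
      by (rule set_integrable_subset) auto
    hence "set_integrable lborel {0<..<1} B" unfolding B_def by (rule set_integrable_divide)
    thus ?thesis by (simp add: zero_ereal_def one_ereal_def)
  qed
  have ei: "einterval 0 1 = {0<..<(1::real)}" by (simp add: zero_ereal_def one_ereal_def)
  have fg: "bkernel b (g x) * g' x = B x" if "x \<in> einterval 0 1" for x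
    using that bkernel_logit_substitution[of x b] unfolding ei g_def g'_def B_def by auto
  have intfg: "set_integrable lborel (einterval 0 1) (\<lambda>x. bkernel b (g x) * g' x)"
  proof -
    have "set_integrable lborel (einterval 0 1) (\<lambda>x. bkernel b (g x) * g' x) = set_integrable lborel (einterval 0 1) B"
      by (rule set_integrable_cong[OF refl refl fg])
    thus ?thesis using intB by simp
  qed
  note sub = interval_integral_substitution_nonneg[of 0 1 g g' "bkernel b" "-\<infinity>" "\<infinity>",
      OF _ deriv contf contg' fnn g'nn A Bl intfg]
  show "set_integrable lborel (einterval (-\<infinity>) \<infinity>) (bkernel b)" using sub(1) by simp
  have "(LBINT x=-\<infinity>..\<infinity>. bkernel b x) = (LBINT x=0..1. bkernel b (g x) * g' x)" using sub(2) by simp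
  also have "\<dots> = (LBINT x=0..1. B x)"
    by (rule interval_integral_cong) (use fg in auto)
  also have "(LBINT x=0..1. B x) = (LBINT x=ereal 0..ereal 1. B x)" by (simp add: zero_ereal_def one_ereal_def)
  also have "\<dots> = integral {0..1} B"
  proof (rule interval_integral_eq_integral)
    have "set_integrable lborel {0..1} (\<lambda>t. t powr (b - 1) * (1 - t) powr ((1-b) - 1))"
      using integrable_Beta[of b "1-b"] b by simp
    thus "set_integrable lborel {0..1} B" unfolding B_def by (rule set_integrable_divide)
  qed simp
  also have "integral {0..1} B = Beta b (1-b) / 2"
  proof -
    have "((\<lambda>t. t powr (b - 1) * (1 - t) powr ((1-b) - 1)) has_integral Beta b (1-b)) {0..1}"
      using has_integral_Beta_real[of b "1-b"] b by simp
    hence "(B has_integral Beta b (1-b) / 2) {0..1}" unfolding B_def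
      by (rule has_integral_divide)
    thus ?thesis by (rule integral_unique)
  qed
  finally show "(LBINT x=-\<infinity>..\<infinity>. bkernel b x) = Beta b (1-b) / 2" .
qed

lemma Beta_reflection:
  fixes b :: real assumes "0 < b" "b < 1"
  shows "Beta b (1-b) = pi / sin (pi * b)"
proof -
  have g1: "Gamma (1 - complex_of_real b) = complex_of_real (Gamma (1-b))"
    using Gamma_complex_of_real[of "1-b"] by simp
  have "complex_of_real (Gamma b * Gamma (1-b)) = Gamma (complex_of_real b) * Gamma (1 - complex_of_real b)"
    by (simp add: Gamma_complex_of_real g1)
  also have "\<dots> = of_real pi / sin (of_real pi * of_real b)" by (rule Gamma_reflection_complex)
  also have "\<dots> = of_real (pi / sin (pi * b))" by (simp flip: sin_of_real)
  finally have "Gamma b * Gamma (1-b) = pi / sin (pi * b)" by (simp only: of_real_eq_iff)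
  thus ?thesis by (simp add: Beta_def)
qed

definition bkernel_integral :: "real \<Rightarrow> real" where "bkernel_integral b = pi / (2 * sin (pi * b))"

lemma bkernel_integrable_on: "bkernel b integrable_on {x0..x1}"
  by (rule integrable_continuous_interval[OF continuous_on_bkernel])

lemma integral_bkernel_shift:
  "integral {c..c+k} (\<lambda>x. bkernel b (x + s)) = integral {c+s..c+k+s} (bkernel b)"
proof -
  have "(bkernel b has_integral integral {c+s..c+k+s} (bkernel b)) {c+s..c+k+s}"
    using bkernel_integrable_on by (rule integrable_integral)
  from has_integral_shift_real_ivl[OF this, of s]
  have "((\<lambda>x. bkernel b (x + s)) has_integral integral {c+s..c+k+s} (bkernel b)) {c..c+k}" by simp
  thus ?thesis by (rule integral_unique)
qed

definition pkernel_term_integral :: "real \<Rightarrow> real \<Rightarrow> real \<Rightarrow> nat \<Rightarrow> real" where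
  "pkernel_term_integral b k c n = integral {c..c+k} (\<lambda>x. bkernel b (x + real n * k) + bkernel b (x - real (Suc n) * k))"

lemma pkernel_term_integral_eq:
  "pkernel_term_integral b k c n = integral {c + real n * k .. c + real (Suc n) * k} (bkernel b) +
                integral {c - real (Suc n) * k .. c - real n * k} (bkernel b)"
proof -
  define s where "s = real (Suc n) * k"
  have i1: "(\<lambda>x. bkernel b (x + real n * k)) integrable_on {c..c+k}"
    by (rule integrable_continuous_interval) (intro continuous_on_compose2[OF continuous_on_bkernel] continuous_intros, auto)
  have i2: "(\<lambda>x. bkernel b (x + (-s))) integrable_on {c..c+k}"
    by (rule integrable_continuous_interval) (intro continuous_on_compose2[OF continuous_on_bkernel] continuous_intros, auto)
  have fe: "(\<lambda>x. bkernel b (x + real n * k) + bkernel b (x - s)) = (\<lambda>x. bkernel b (x + real n * k) + bkernel b (x + (-s)))"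
    by simp
  have "pkernel_term_integral b k c n = integral {c..c+k} (\<lambda>x. bkernel b (x + real n * k)) + integral {c..c+k} (\<lambda>x. bkernel b (x + (-s)))"
    unfolding pkernel_term_integral_def s_def[symmetric] fe by (rule integral_add[OF i1 i2])
  also have "\<dots> = integral {c + real n * k .. c + k + real n * k} (bkernel b) +
                  integral {c + (-s) .. c + k + (-s)} (bkernel b)"
    by (simp only: integral_bkernel_shift)
  also have "c + k + real n * k = c + real (Suc n) * k" by (simp add: algebra_simps)
  also have "c + (-s) = c - real (Suc n) * k" by (simp add: s_def)
  also have "c + k + (-s) = c - real n * k" by (simp add: s_def algebra_simps)
  finally show ?thesis .
qed

lemma sum_pkernel_term_integral:
  assumes k: "k > 0"
  shows "(\<Sum>n<N. pkernel_term_integral b k c n) = integral {c - real N * k .. c + real N * k} (bkernel b)"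
proof (induction N)
  case 0
  show ?case by simp
next
  case (Suc N)
  have "(\<Sum>n<Suc N. pkernel_term_integral b k c n) = integral {c - real N * k .. c + real N * k} (bkernel b) + pkernel_term_integral b k c N"
    using Suc by simp
  also have "\<dots> = integral {c - real (Suc N) * k .. c - real N * k} (bkernel b) +
                  (integral {c - real N * k .. c + real N * k} (bkernel b) +
                   integral {c + real N * k .. c + real (Suc N) * k} (bkernel b))"
    unfolding pkernel_term_integral_eq by simp
  also have "integral {c - real N * k .. c + real N * k} (bkernel b) +
                   integral {c + real N * k .. c + real (Suc N) * k} (bkernel b) =
             integral {c - real N * k .. c + real (Suc N) * k} (bkernel b)"
    using k by (intro Henstock_Kurzweil_Integration.integral_combine bkernel_integrable_on) (auto simp: algebra_simps)
  also have "integral {c - real (Suc N) * k .. c - real N * k} (bkernel b) +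
               integral {c - real N * k .. c + real (Suc N) * k} (bkernel b) =
             integral {c - real (Suc N) * k .. c + real (Suc N) * k} (bkernel b)"
    using k by (intro Henstock_Kurzweil_Integration.integral_combine bkernel_integrable_on) (auto simp: algebra_simps)
  finally show ?case .
qed

lemma pkernel_term_integral_sums:
  assumes b: "0 < b" "b < 1" and k: "k > 0"
  shows "pkernel_term_integral b k c sums bkernel_integral b"
proof -
  define l where "l = (\<lambda>i::nat. c - real (Suc i) * k)"
  define u where "u = (\<lambda>i::nat. c + real (Suc i) * k)"
  have lim: "(\<lambda>i. LBINT x=l i..u i. bkernel b x) \<longlonglongrightarrow> (LBINT x=-\<infinity>..\<infinity>. bkernel b x)"
  proof (rule interval_integral_Icc_approx_integrable)
    show "einterval (-\<infinity>) \<infinity> = (\<Union>i. {l i..u i})"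
    proof (rule set_eqI, rule iffI)
      fix x :: real
      obtain n :: nat where n: "\<bar>x - c\<bar> / k < real n" using reals_Archimedean2 by blast
      hence "\<bar>x - c\<bar> < real n * k" using k by (simp add: field_simps)
      hence "x \<in> {l n..u n}" using k unfolding l_def u_def by (auto simp: abs_less_iff algebra_simps)
      thus "x \<in> (\<Union>i. {l i..u i})" by blast
    qed auto
    show "incseq u" unfolding u_def incseq_def using k by (auto intro!: mult_right_mono)
    show "decseq l" unfolding l_def decseq_def using k by (auto intro!: mult_right_mono)
    show "l i < u i" for i using k by (simp add: l_def u_def)
    show "- \<infinity> < ereal (l i)" for i by simp
    show "ereal (u i) < \<infinity>" for i by simp
    show "(\<lambda>i. ereal (l i)) \<longlonglongrightarrow> - \<infinity>"
    proof -
      have "filterlim l at_bot sequentially" unfolding l_def using k by real_asymp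
      hence "((ereal \<circ> l) \<longlongrightarrow> -\<infinity>) sequentially" by (subst ereal_tendsto_simps2)
      thus ?thesis by (simp add: comp_def)
    qed
    show "(\<lambda>i. ereal (u i)) \<longlonglongrightarrow> \<infinity>"
    proof -
      have "filterlim u at_top sequentially" unfolding u_def using k by real_asymp
      hence "((ereal \<circ> u) \<longlongrightarrow> \<infinity>) sequentially" by (subst ereal_tendsto_simps2)
      thus ?thesis by (simp add: comp_def)
    qed
    show "set_integrable lborel (einterval (- \<infinity>) \<infinity>) (bkernel b)" by (rule bkernel_interval_integral[OF b])
  qed simp
  have eqi: "(LBINT x=l i..u i. bkernel b x) = (\<Sum>n<Suc i. pkernel_term_integral b k c n)" for i
  proof -
    have "(LBINT x=l i..u i. bkernel b x) = integral {l i..u i} (bkernel b)"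
      using k by (intro interval_integral_eq_integral borel_integrable_atLeastAtMost' continuous_on_bkernel) (simp add: l_def u_def)
    also have "\<dots> = (\<Sum>n<Suc i. pkernel_term_integral b k c n)" unfolding sum_pkernel_term_integral[OF k] by (simp add: l_def u_def)
    finally show ?thesis .
  qed
  have val: "(LBINT x=-\<infinity>..\<infinity>. bkernel b x) = bkernel_integral b"
    unfolding bkernel_interval_integral(2)[OF b] Beta_reflection[OF b] bkernel_integral_def by simp
  have "(\<lambda>i. \<Sum>n<Suc i. pkernel_term_integral b k c n) \<longlonglongrightarrow> bkernel_integral b" using lim unfolding eqi val .
  hence "(\<lambda>N. \<Sum>n<N. pkernel_term_integral b k c n) \<longlonglongrightarrow> bkernel_integral b" by (rule LIMSEQ_imp_Suc)
  thus ?thesis by (simp add: sums_def)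
qed

lemma contour_integral_pkernel_c_period:
  assumes b: "0 < b" "b < 1" and k: "0 < k" and c: "-1 < c" "c + k < 2"
  shows "contour_integral (linepath (of_real c) (of_real (c+k))) (pkernel_c b k) = of_real (bkernel_integral b)"
proof -
  have seg: "closed_segment (of_real c) (of_real (c+k)) \<subseteq> pkernel_domain"
  proof
    fix w assume "w \<in> closed_segment (complex_of_real c) (complex_of_real (c+k))"
    then obtain t where t: "0 \<le> t" "t \<le> 1" "w = (1 - t) *\<^sub>R of_real c + t *\<^sub>R of_real (c+k)"
      unfolding in_segment by blast
    hence "w = of_real (c + t * k)" by (simp add: scaleR_conv_of_real algebra_simps)
    moreover have "c \<le> c + t * k" "c + t * k \<le> c + k" using t k by (auto simp: mult_left_le_one_le)
    ultimately show "w \<in> pkernel_domain" using c by (auto simp: mem_pkernel_domain)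
  qed
  have ul0: "uniform_limit pkernel_domain (\<lambda>N z. \<Sum>n<N. pkernel_term_c b k z n) (\<lambda>z. \<Sum>n. pkernel_term_c b k z n) sequentially"
    by (rule Weierstrass_m_test[OF _ summable_pkernel_term_majorant[OF b k]])
       (rule norm_pkernel_term_c_le_majorant[OF b k], auto simp: mem_pkernel_domain)
  have ul: "uniform_limit (closed_segment (of_real c) (of_real (c+k))) (\<lambda>N w. \<Sum>n<N. (\<lambda>n w. pkernel_term_c b k w n) n w) (pkernel_c b k) sequentially"
    using uniform_limit_on_subset[OF ul0 seg] unfolding pkernel_c_def by simp
  have cont: "continuous_on (closed_segment (of_real c) (of_real (c+k))) ((\<lambda>n w. pkernel_term_c b k w n) n)" for n
    using holomorphic_on_imp_continuous_on[OF pkernel_term_c_holomorphic[of b k n]] seg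
    by (auto intro: continuous_on_subset)
  obtain J where J1: "(pkernel_c b k has_contour_integral J) (linepath (of_real c) (of_real (c+k)))"
     and J2: "(\<lambda>n. contour_integral (linepath (of_real c) (of_real (c+k))) ((\<lambda>n w. pkernel_term_c b k w n) n)) sums J"
    using contour_integral_sums_linepath[OF ul cont] by blast
  have ci: "contour_integral (linepath (of_real c) (of_real (c+k))) (\<lambda>w. pkernel_term_c b k w n) = of_real (pkernel_term_integral b k c n)" for n
  proof -
    have "contour_integral (linepath (of_real c) (of_real (c+k))) (\<lambda>w. pkernel_term_c b k w n) =
          integral {c..c+k} (\<lambda>x. pkernel_term_c b k (of_real x) n)"
      using contour_integral_linepath_Reals_eq[of "of_real c" "of_real (c+k)" "\<lambda>w. pkernel_term_c b k w n"] k by simp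
    also have "\<dots> = integral {c..c+k} (\<lambda>x. of_real (bkernel b (x + real n * k) + bkernel b (x - real (Suc n) * k)))"
      by (simp only: pkernel_term_c_of_real)
    also have "\<dots> = of_real (pkernel_term_integral b k c n)"
    proof -
      have int: "(\<lambda>x. bkernel b (x + real n * k) + bkernel b (x - real (Suc n) * k)) integrable_on {c..c+k}"
        by (rule integrable_continuous_interval)
           (intro continuous_intros continuous_on_compose2[OF continuous_on_bkernel], auto)
      have "((\<lambda>x. of_real (bkernel b (x + real n * k) + bkernel b (x - real (Suc n) * k)) :: complex) has_integral of_real (pkernel_term_integral b k c n)) {c..c+k}"
        unfolding pkernel_term_integral_def by (rule has_integral_of_real[OF integrable_integral[OF int]])
      thus ?thesis by (rule integral_unique)
    qed
    finally show ?thesis .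
  qed
  have "(\<lambda>n. (of_real (pkernel_term_integral b k c n) :: complex)) sums J" using J2 ci by simp
  moreover have "(\<lambda>n. (of_real (pkernel_term_integral b k c n) :: complex)) sums of_real (bkernel_integral b)"
    using pkernel_term_integral_sums[OF b k, of c] by (simp only: sums_of_real_iff)
  ultimately have "J = of_real (bkernel_integral b)" by (rule sums_unique2)
  thus ?thesis using J1 by (simp add: contour_integral_unique)
qed

lemma pkernel_trapezoid_error_period:
  assumes b: "0 < b" "b < 1" and k: "0 < k" "k \<le> 1" and a: "0 \<le> a" "a \<le> k"
  shows "\<bar>k * pkernel b k a - bkernel_integral b\<bar> \<le> 4 * pkernel_const b * exp (-(pi^2)/(2*k))"
proof -
  have box: "cbox (Complex (a - k/2) (-(pi/4))) (Complex (a + k/2) (pi/4)) \<subseteq> pkernel_domain"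
    using k a pi_gt3 by (auto simp: in_cbox_complex_iff mem_pkernel_domain)
  have in_box: "\<bar>Im w\<bar> \<le> pi/3" "\<bar>Re w\<bar> \<le> 2" if "w \<in> cbox (Complex (a - k/2) (-(pi/4))) (Complex (a + k/2) (pi/4))" for w
    using that k a pi_gt_zero by (auto simp: in_cbox_complex_iff)
  have "cmod (of_real k * pkernel_c b k (of_real a) -
           contour_integral (linepath (of_real (a - k/2)) (of_real (a + k/2))) (pkernel_c b k))
        \<le> 4 * k * (pkernel_const b / k) * exp (-2 * pi * (pi/4) / k)"
  proof (rule periodic_trapezoid_error[OF pkernel_c_holomorphic[OF b k(1)] open_pkernel_domain convex_pkernel_domain])
    have "3 * 3 \<le> pi * pi" using pi_gt3 by (intro mult_mono) auto
    thus "k \<le> 2 * pi * (pi/4)" using k by simp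
    show "pkernel_c b k (w + of_real k) = pkernel_c b k w" if "w \<in> cbox (Complex (a - k/2) (-(pi/4))) (Complex (a + k/2) (pi/4))" "Re w = a - k/2" for w
      using in_box(1)[OF that(1)] by (rule pkernel_c_periodic[OF b k(1)])
    show "cmod (pkernel_c b k w) \<le> pkernel_const b / k" if "w \<in> cbox (Complex (a - k/2) (-(pi/4))) (Complex (a + k/2) (pi/4))" for w
      using norm_pkernel_c_le[OF b k in_box[OF that]] k by (simp add: field_simps)
    show "pkernel_c b k (of_real a) \<noteq> 0"
      using pkernel_c_of_real(1,3)[OF b k(1), of a] by simp
  qed (use box k in \<open>simp_all\<close>)
  also have "\<dots> = 4 * pkernel_const b * exp (-(pi^2)/(2*k))"
    using k by (simp add: power2_eq_square field_simps)
  finally have "cmod (of_real k * pkernel_c b k (of_real a) - of_real (bkernel_integral b))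
                  \<le> 4 * pkernel_const b * exp (-(pi^2)/(2*k))"
    using contour_integral_pkernel_c_period[OF b k(1), of "a - k/2"] k a by (simp add: algebra_simps)
  moreover have "of_real k * pkernel_c b k (of_real a) - of_real (bkernel_integral b) =
                   (of_real (k * pkernel b k a - bkernel_integral b) :: complex)"
    using pkernel_c_of_real(1)[OF b k(1)] by simp
  ultimately show ?thesis by (simp only: norm_of_real)
qed

lemma pkernel_periodic:
  assumes b: "0 < b" "b < 1" and k: "0 < k"
  shows "pkernel b k (x + k) = pkernel b k x"
proof -
  have "(of_real (pkernel b k (x + k)) :: complex) = pkernel_c b k (of_real x + of_real k)"
    using pkernel_c_of_real(1)[OF b k, of "x+k"] by simp
  also have "\<dots> = pkernel_c b k (of_real x)" by (rule pkernel_c_periodic[OF b k]) simp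
  also have "\<dots> = of_real (pkernel b k x)" by (rule pkernel_c_of_real(1)[OF b k])
  finally show ?thesis by (simp only: of_real_eq_iff)
qed

lemma pkernel_periodic_int:
  assumes b: "0 < b" "b < 1" and k: "0 < k"
  shows "pkernel b k (x + real_of_int j * k) = pkernel b k x"
proof -
  have nat: "pkernel b k (y + real n * k) = pkernel b k y" for y n
  proof (induction n)
    case (Suc n)
    have "pkernel b k (y + real (Suc n) * k) = pkernel b k ((y + real n * k) + k)" by (simp add: algebra_simps)
    also have "\<dots> = pkernel b k (y + real n * k)" by (rule pkernel_periodic[OF b k])
    finally show ?case using Suc by simp
  qed simp
  show ?thesis
  proof (cases "j \<ge> 0")
    case True
    then obtain n where "j = int n" by (metis nonneg_eq_int)
    thus ?thesis using nat by simp
  next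
    case False
    then obtain n where n: "j = - int n" by (metis nle_le nonpos_int_cases)
    have "pkernel b k x = pkernel b k ((x - real n * k) + real n * k)" by simp
    also have "\<dots> = pkernel b k (x - real n * k)" by (rule nat)
    finally show ?thesis using n by simp
  qed
qed

lemma pkernel_trapezoid_error:
  assumes b: "0 < b" "b < 1" and k: "0 < k" "k \<le> 1"
  shows "\<bar>k * pkernel b k a - bkernel_integral b\<bar> \<le> 4 * pkernel_const b * exp (-(pi^2)/(2*k))"
proof -
  define j where "j = \<lfloor>a / k\<rfloor>"
  define a' where "a' = a - real_of_int j * k"
  have "real_of_int j \<le> a / k" "a / k < real_of_int j + 1" unfolding j_def by linarith+
  hence "real_of_int j * k \<le> a" "a < (real_of_int j + 1) * k" using k by (simp_all add: field_simps)
  hence a': "0 \<le> a'" "a' \<le> k" unfolding a'_def by (simp_all add: algebra_simps)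
  have "pkernel b k a = pkernel b k (a' + real_of_int j * k)" by (simp add: a'_def)
  also have "\<dots> = pkernel b k a'" by (rule pkernel_periodic_int[OF b k(1)])
  finally show ?thesis using pkernel_trapezoid_error_period[OF b k a'] by simp
qed

section \<open>Error of the scalar sinc quadrature\<close>

text \<open>\<open>sinc_quad \<beta> k\<close> is the scalar function \<open>q\<close> with \<open>Q_{h,k}^\<beta> = q(L_h)\<close>.\<close>

definition sinc_quad :: "real \<Rightarrow> real \<Rightarrow> real \<Rightarrow> real" where
  "sinc_quad b k lam = (2 * k * sin (pi * b) / pi) *
     (\<Sum>l\<in>{- Kminus b k .. Kplus b k}. exp (2*b*(of_int l*k)) / (1 + exp (2*(of_int l*k)) * lam))"

lemma sum_int_interval_split:
  fixes m p :: nat and F :: "int \<Rightarrow> 'b::comm_monoid_add"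
  shows "(\<Sum>l\<in>{-int m..int p}. F l) = (\<Sum>n\<le>p. F (int n)) + (\<Sum>n<m. F (-int n - 1))"
proof -
  have eq: "{-int m..int p} = int ` {..p} \<union> (\<lambda>n. -int n - 1) ` {..<m}"
  proof (rule set_eqI, rule iffI)
    fix l assume l: "l \<in> {-int m..int p}"
    show "l \<in> int ` {..p} \<union> (\<lambda>n. -int n - 1) ` {..<m}"
    proof (cases "l \<ge> 0")
      case True
      hence "l = int (nat l)" "nat l \<le> p" using l by auto
      thus ?thesis by blast
    next
      case False
      hence "l = - int (nat (-l-1)) - 1" "nat (-l-1) < m" using l by auto
      thus ?thesis by blast
    qed
  qed auto
  have disj: "int ` {..p} \<inter> (\<lambda>n. -int n - 1) ` {..<m} = {}" by auto
  have inj1: "inj_on int {..p}" by (simp add: inj_on_def)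
  have inj2: "inj_on (\<lambda>n. -int n - 1) {..<m}" by (simp add: inj_on_def)
  show ?thesis unfolding eq
    by (subst sum.union_disjoint) (auto simp: disj sum.reindex[OF inj1] sum.reindex[OF inj2])
qed

lemma bkernel_le_exp_left: "bkernel b y \<le> exp (2*b*y)"
proof -
  have p: "0 < 1 + exp (2*y)" using exp_gt_zero[of "2*y"] by linarith
  have "exp (2*b*y) / (1 + exp (2*y)) \<le> exp (2*b*y) / 1"
    by (intro divide_left_mono) (use p in auto)
  thus ?thesis by (simp add: bkernel_def)
qed

lemma bkernel_le_exp_right: "bkernel b y \<le> exp (2*(b-1)*y)"
proof -
  have p: "0 < 1 + exp (2*y)" using exp_gt_zero[of "2*y"] by linarith
  have "exp (2*b*y) / (1 + exp (2*y)) \<le> exp (2*b*y) / exp (2*y)"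
    by (intro divide_left_mono) (use p in \<open>auto intro: mult_pos_pos\<close>)
  also have "exp (2*b*y) / exp (2*y) = exp (2*(b-1)*y)" by (simp add: exp_diff[symmetric] algebra_simps)
  finally show ?thesis by (simp add: bkernel_def)
qed

lemma quad_term_eq_bkernel:
  assumes lam: "lam > 0"
  shows "exp (2*b*y) / (1 + exp (2*y) * lam) = lam powr (-b) * bkernel b (y + ln lam / 2)"
proof -
  have l: "lam = exp (ln lam)" using lam by simp
  have "bkernel b (y + ln lam / 2) = exp (2*b*y) * exp (b * ln lam) / (1 + exp (2*y) * exp (ln lam))"
    unfolding bkernel_def by (simp add: algebra_simps exp_add[symmetric])
  also have "exp (b * ln lam) = lam powr b" using lam by (simp add: powr_def mult.commute)
  also have "exp (ln lam) = lam" using lam by simp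
  finally have "bkernel b (y + ln lam / 2) = exp (2*b*y) * lam powr b / (1 + exp (2*y) * lam)" .
  moreover have "lam powr (-b) * lam powr b = 1" using lam by (simp add: powr_add[symmetric])
  ultimately show ?thesis by (simp add: field_simps)
qed

lemma Kminus_ge: "0 < b \<Longrightarrow> 0 < k \<Longrightarrow> real_of_int (Kminus b k) \<ge> pi^2/(4*b*k^2) \<and> Kminus b k \<ge> 0"
proof -
  assume "0 < b" "0 < k"
  hence "pi^2/(4*b*k^2) > 0" by simp
  thus ?thesis unfolding Kminus_def by (meson le_of_int_ceiling less_le_trans of_int_0_le_iff order_less_imp_le ceiling_le_zero not_le)
qed

lemma Kplus_ge: "b < 1 \<Longrightarrow> 0 < k \<Longrightarrow> real_of_int (Kplus b k) \<ge> pi^2/(4*(1-b)*k^2) \<and> Kplus b k \<ge> 0"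
proof -
  assume "b < 1" "0 < k"
  hence "pi^2/(4*(1-b)*k^2) > 0" by simp
  thus ?thesis unfolding Kplus_def by (meson le_of_int_ceiling less_le_trans of_int_0_le_iff order_less_imp_le ceiling_le_zero not_le)
qed

lemma exp_power_ceiling_le:
  fixes c k :: real and K :: int
  assumes "c > 0" "k > 0" "real_of_int K \<ge> pi^2/(2*c*k^2)"
  shows "exp (-c*k) ^ nat K \<le> exp (-(pi^2)/(2*k))"
proof -
  have K0: "K \<ge> 0"
  proof -
    have "pi^2/(2*c*k^2) > 0" using assms by simp
    thus ?thesis using assms(3) by linarith
  qed
  have "exp (-c*k) ^ nat K = exp (-c*k * real_of_int K)"
    using K0 by (simp add: exp_of_nat_mult[symmetric] mult.commute)
  also have "-c*k * real_of_int K \<le> -c*k * (pi^2/(2*c*k^2))"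
    using assms by (intro mult_left_mono_neg) auto
  also have "-c*k * (pi^2/(2*c*k^2)) = -(pi^2)/(2*k)"
    using assms by (simp add: field_simps power2_eq_square)
  finally show ?thesis by simp
qed

lemma Kminus_Kplus_rates:
  assumes "0 < b" "b < 1" "0 < k"
  shows "Kminus b k \<ge> 0" "Kplus b k \<ge> 0"
    and "exp (-2*b*k) ^ nat (Kminus b k) \<le> exp (-(pi^2)/(2*k))"
    and "exp (-2*(1-b)*k) ^ nat (Kplus b k) \<le> exp (-(pi^2)/(2*k))"
  using Kminus_ge[of b k] Kplus_ge[of b k] exp_power_ceiling_le[of "2*b" k "Kminus b k"]
        exp_power_ceiling_le[of "2*(1-b)" k "Kplus b k"] assms
  by (auto simp: field_simps)

lemma suminf_shift_le_geometric:
  fixes f :: "nat \<Rightarrow> real"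
  assumes f: "\<And>n. 0 \<le> f n" "\<And>n. f n \<le> C * q ^ n" and q: "0 \<le> q" "q < 1"
  shows "summable f" "(\<Sum>j. f (j + N)) \<le> C * (q ^ N / (1 - q))"
proof -
  have g: "(\<lambda>j. C * q ^ (j + N)) sums (C * (q ^ N * (1 / (1 - q))))"
    using sums_mult[OF sums_mult[OF geometric_sums[of q], of "q ^ N"], of C] q
    by (simp add: power_add mult_ac)
  show "summable f"
    by (rule summable_comparison_test[of _ "\<lambda>n. C * q ^ n"]) (use f q in \<open>auto intro: summable_mult summable_geometric\<close>)
  have "(\<Sum>j. f (j + N)) \<le> (\<Sum>j. C * q ^ (j + N))"
    by (intro suminf_le f(2) summable_ignore_initial_segment[OF \<open>summable f\<close>] sums_summable[OF g])
  thus "(\<Sum>j. f (j + N)) \<le> C * (q ^ N / (1 - q))" using sums_unique[OF g] by simp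
qed

text \<open>The quadrature sum is a truncation of the periodised kernel \<open>pkernel\<close>, evaluated at the point
  \<open>ln lam / 2\<close>; the two neglected tails are \<open>tail_right\<close> and \<open>tail_left\<close>.\<close>

definition tail_right :: "real \<Rightarrow> real \<Rightarrow> real \<Rightarrow> real" where
  "tail_right b k lam = (\<Sum>j. bkernel b (ln lam / 2 + real (j + Suc (nat (Kplus b k))) * k))"

definition tail_left :: "real \<Rightarrow> real \<Rightarrow> real \<Rightarrow> real" where
  "tail_left b k lam = (\<Sum>j. bkernel b (ln lam / 2 - real (Suc (j + nat (Kminus b k))) * k))"

lemma bkernel_right_le_geometric:
  "bkernel b (a + real n * k) \<le> exp (2*(b-1)*a) * exp (-2*(1-b)*k) ^ n"
proof -
  have "bkernel b (a + real n * k) \<le> exp (2*(b-1)*(a + real n * k))" by (rule bkernel_le_exp_right)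
  also have "\<dots> = exp (2*(b-1)*a) * exp (-2*(1-b)*k) ^ n"
    by (simp add: exp_add[symmetric] exp_of_nat_mult[symmetric] algebra_simps)
  finally show ?thesis .
qed

lemma bkernel_left_le_geometric:
  "bkernel b (a - real (Suc n) * k) \<le> exp (2*b*a) * exp (-2*b*k) * exp (-2*b*k) ^ n"
proof -
  have "bkernel b (a - real (Suc n) * k) \<le> exp (2*b*(a - real (Suc n) * k))" by (rule bkernel_le_exp_left)
  also have "\<dots> = exp (2*b*a) * exp (-2*b*k) * exp (-2*b*k) ^ n"
    by (simp only: exp_of_nat_mult[symmetric] exp_add[symmetric]) (simp add: algebra_simps)
  finally show ?thesis .
qed

lemma sinc_quad_eq_pkernel_minus_tails:
  assumes b: "0 < b" "b < 1" and k: "0 < k" and lam: "0 < lam"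
  shows "sinc_quad b k lam = (2 * sin (pi * b) / pi) * lam powr (-b) *
           (k * pkernel b k (ln lam / 2) - k * tail_right b k lam - k * tail_left b k lam)"
proof -
  define a where "a = ln lam / 2"
  define m where "m = nat (Kminus b k)"
  define p where "p = nat (Kplus b k)"
  define A where "A = (\<lambda>n. bkernel b (a + real n * k))"
  define B where "B = (\<lambda>n. bkernel b (a - real (Suc n) * k))"
  note rates = norm_exp_rates_lt_1[OF b k]
  have sA: "summable A" unfolding A_def
    by (rule suminf_shift_le_geometric(1)[OF less_imp_le[OF bkernel_pos] bkernel_right_le_geometric])
       (use rates in auto)
  have sB: "summable B" unfolding B_def
    by (rule suminf_shift_le_geometric(1)[OF less_imp_le[OF bkernel_pos] bkernel_left_le_geometric])
       (use rates in auto)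
  have "pkernel b k a = suminf A + suminf B"
    unfolding pkernel_def A_def[symmetric] B_def[symmetric]
    using sA sB by (subst suminf_add) (auto simp: A_def B_def)
  also have "suminf A = tail_right b k lam + (\<Sum>n<Suc p. A n)"
    unfolding tail_right_def using suminf_split_initial_segment[OF sA, of "Suc p"]
    by (simp add: A_def a_def p_def add.commute)
  also have "suminf B = tail_left b k lam + (\<Sum>n<m. B n)"
    unfolding tail_left_def using suminf_split_initial_segment[OF sB, of m]
    by (simp add: B_def a_def m_def add.commute)
  finally have split: "(\<Sum>n\<le>p. A n) + (\<Sum>n<m. B n) = pkernel b k a - tail_right b k lam - tail_left b k lam"
    by (simp add: lessThan_Suc_atMost)
  define tm where "tm = (\<lambda>l::int. exp (2*b*(of_int l*k)) / (1 + exp (2*(of_int l*k)) * lam))"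
  have tmA: "tm (int n) = lam powr (-b) * A n" for n
    unfolding tm_def A_def using quad_term_eq_bkernel[OF lam, of b "real n * k"] by (simp add: a_def algebra_simps)
  have tmB: "tm (-int n - 1) = lam powr (-b) * B n" for n
  proof -
    have "of_int (-int n - 1) * k = - (real (Suc n) * k)" by (simp add: algebra_simps)
    hence "tm (-int n - 1) = exp (2*b*(- (real (Suc n) * k))) / (1 + exp (2*(- (real (Suc n) * k))) * lam)"
      unfolding tm_def by simp
    also have "\<dots> = lam powr (-b) * bkernel b (- (real (Suc n) * k) + ln lam / 2)"
      by (rule quad_term_eq_bkernel[OF lam])
    finally show ?thesis by (simp add: B_def a_def)
  qed
  have "{- Kminus b k .. Kplus b k} = {-int m..int p}"
    using Kminus_Kplus_rates(1,2)[OF b k] by (simp add: m_def p_def)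
  hence "(\<Sum>l\<in>{- Kminus b k .. Kplus b k}. tm l) = (\<Sum>n\<le>p. tm (int n)) + (\<Sum>n<m. tm (-int n - 1))"
    by (simp add: sum_int_interval_split)
  also have "\<dots> = lam powr (-b) * (pkernel b k a - tail_right b k lam - tail_left b k lam)"
    by (simp only: tmA tmB sum_distrib_left[symmetric] distrib_left[symmetric] split)
  finally have sum_eq: "(\<Sum>l\<in>{- Kminus b k .. Kplus b k}. tm l) =
      lam powr (-b) * (pkernel b k a - tail_right b k lam - tail_left b k lam)" .
  show ?thesis
    unfolding sinc_quad_def tm_def[symmetric] a_def[symmetric] sum_eq by (simp add: field_simps)
qed

lemma tails_nonneg:
  assumes b: "0 < b" "b < 1" and k: "0 < k"
  shows "0 \<le> tail_right b k lam" "0 \<le> tail_left b k lam"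
proof -
  note rates = norm_exp_rates_lt_1[OF b k]
  have "summable (\<lambda>n. bkernel b (ln lam / 2 + real n * k))"
    by (rule suminf_shift_le_geometric(1)[OF less_imp_le[OF bkernel_pos] bkernel_right_le_geometric])
       (use rates in auto)
  thus "0 \<le> tail_right b k lam" unfolding tail_right_def
    by (rule suminf_nonneg[OF summable_ignore_initial_segment]) (rule less_imp_le[OF bkernel_pos])
  have "summable (\<lambda>n. bkernel b (ln lam / 2 - real (Suc n) * k))"
    by (rule suminf_shift_le_geometric(1)[OF less_imp_le[OF bkernel_pos] bkernel_left_le_geometric])
       (use rates in auto)
  thus "0 \<le> tail_left b k lam" unfolding tail_left_def
    by (rule suminf_nonneg[OF summable_ignore_initial_segment]) (rule less_imp_le[OF bkernel_pos])
qed

lemma tail_right_le: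
  assumes b: "0 < b" "b < 1" and k: "0 < k" and lam: "0 < lam"
  shows "lam powr (-b) * (k * tail_right b k lam) \<le> exp (-(pi^2)/(2*k)) / (2 * (1-b) * lam)"
proof -
  define r where "r = exp (-2*(1-b)*k)"
  define p where "p = nat (Kplus b k)"
  have r: "0 \<le> r" "r < 1" using norm_exp_rates_lt_1(1)[OF b k] by (auto simp: r_def)
  have tail: "tail_right b k lam \<le> exp (2*(b-1)*(ln lam / 2)) * (r ^ Suc p / (1 - r))"
    unfolding tail_right_def p_def[symmetric] r_def
    by (rule suminf_shift_le_geometric(2)[OF less_imp_le[OF bkernel_pos] bkernel_right_le_geometric])
       (use r in \<open>simp_all add: r_def\<close>)
  have lam_exp: "lam powr (-b) * exp (2*(b-1)*(ln lam / 2)) = 1 / lam"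
  proof -
    have "exp (2*(b-1)*(ln lam / 2)) = lam powr (b-1)" using lam by (simp add: powr_def algebra_simps)
    moreover have "lam powr (-b) * lam powr (b-1) = lam powr (-1)" using lam by (simp add: powr_add[symmetric])
    ultimately show ?thesis using lam by (simp add: powr_minus_divide)
  qed
  have rp: "r ^ p \<le> exp (-(pi^2)/(2*k))" using Kminus_Kplus_rates(4)[OF b k] by (simp add: r_def p_def)
  have geo: "k * (r / (1 - r)) \<le> 1 / (2*(1-b))"
    using geometric_tail_scaled_le[of "2*(1-b)" k] b k by (simp add: r_def)
  have "lam powr (-b) * (k * tail_right b k lam)
      \<le> lam powr (-b) * (k * (exp (2*(b-1)*(ln lam / 2)) * (r ^ Suc p / (1 - r))))"
    using k tail by (intro mult_left_mono) auto
  also have "\<dots> = (1 / lam) * (r ^ p * (k * (r / (1 - r))))"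
    using lam_exp by (simp add: algebra_simps)
  also have "\<dots> \<le> (1 / lam) * (exp (-(pi^2)/(2*k)) * (1 / (2*(1-b))))"
    using rp geo lam r k by (intro mult_left_mono mult_mono) auto
  finally show ?thesis by (simp add: mult.commute)
qed

lemma tail_left_le:
  assumes b: "0 < b" "b < 1" and k: "0 < k" and lam: "0 < lam"
  shows "lam powr (-b) * (k * tail_left b k lam) \<le> exp (-(pi^2)/(2*k)) / (2 * b)"
proof -
  define s where "s = exp (-2*b*k)"
  define m where "m = nat (Kminus b k)"
  have s: "0 \<le> s" "s < 1" using norm_exp_rates_lt_1(2)[OF b k] by (auto simp: s_def)
  have tail: "tail_left b k lam \<le> exp (2*b*(ln lam / 2)) * s * (s ^ m / (1 - s))"
    unfolding tail_left_def m_def[symmetric] s_def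
    by (rule suminf_shift_le_geometric(2)[OF less_imp_le[OF bkernel_pos] bkernel_left_le_geometric])
       (use s in \<open>simp_all add: s_def\<close>)
  have lam_exp: "lam powr (-b) * exp (2*b*(ln lam / 2)) = 1"
  proof -
    have "exp (2*b*(ln lam / 2)) = lam powr b" using lam by (simp add: powr_def algebra_simps)
    thus ?thesis using lam by (simp add: powr_add[symmetric])
  qed
  have sm: "s ^ m \<le> exp (-(pi^2)/(2*k))" using Kminus_Kplus_rates(3)[OF b k] by (simp add: s_def m_def)
  have geo: "k * (s / (1 - s)) \<le> 1 / (2*b)"
    using geometric_tail_scaled_le[of "2*b" k] b k by (simp add: s_def)
  have "lam powr (-b) * (k * tail_left b k lam)
      \<le> lam powr (-b) * (k * (exp (2*b*(ln lam / 2)) * s * (s ^ m / (1 - s))))"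
    using k tail by (intro mult_left_mono) auto
  also have "\<dots> = s ^ m * (k * (s / (1 - s)))"
    using lam_exp by (simp add: algebra_simps)
  also have "\<dots> \<le> exp (-(pi^2)/(2*k)) * (1 / (2*b))"
    using sm geo s k by (intro mult_mono) auto
  finally show ?thesis by simp
qed

theorem sinc_quad_error:
  assumes b: "0 < b" "b < 1" and c0: "c0 > 0"
  shows "\<exists>C>0. \<forall>k lam. 0 < k \<longrightarrow> k \<le> 1 \<longrightarrow> lam \<ge> c0 \<longrightarrow>
           \<bar>sinc_quad b k lam - lam powr (-b)\<bar> \<le> C * exp (-(pi^2)/(2*k))"
proof -
  define C where "C = 2/pi * (c0 powr (-b) * (4 * pkernel_const b) + 1/(2*(1-b)*c0) + 1/(2*b))"
  have KB0: "pkernel_const b \<ge> 0" using b by (simp add: pkernel_const_def)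
  have "C > 0" unfolding C_def using b c0 KB0
    by (intro mult_pos_pos add_nonneg_pos add_nonneg_nonneg mult_nonneg_nonneg) auto
  moreover have "\<bar>sinc_quad b k lam - lam powr (-b)\<bar> \<le> C * exp (-(pi^2)/(2*k))"
    if k: "0 < k" "k \<le> 1" and lam: "lam \<ge> c0" for k lam
  proof -
    define E where "E = exp (-(pi^2)/(2*k))"
    define L where "L = lam powr (-b)"
    define D where "D = k * pkernel b k (ln lam / 2) - bkernel_integral b"
    define c where "c = 2 * sin (pi * b) / pi"
    have lam0: "lam > 0" using lam c0 by simp
    have L0: "L > 0" using lam0 by (simp add: L_def)
    have "sin (pi * b) > 0" using b by (intro sin_gt_zero) auto
    hence c: "c * bkernel_integral b = 1" "\<bar>c\<bar> \<le> 2 / pi"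
      by (auto simp: c_def bkernel_integral_def divide_right_mono)
    note tails = tails_nonneg[OF b k(1), of lam]
    define X where "X = L * D - L * (k * tail_right b k lam) - L * (k * tail_left b k lam)"
    have "sinc_quad b k lam - L = c * X"
      using sinc_quad_eq_pkernel_minus_tails[OF b k(1) lam0] c(1)
      by (simp add: c_def[symmetric] L_def[symmetric] D_def X_def algebra_simps)
    hence "\<bar>sinc_quad b k lam - L\<bar> = \<bar>c\<bar> * \<bar>X\<bar>" by (simp add: abs_mult)
    also have "\<dots> \<le> 2 / pi * (L * \<bar>D\<bar> + L * (k * tail_right b k lam) + L * (k * tail_left b k lam))"
    proof (rule mult_mono[OF c(2)])
      have "0 \<le> L * (k * tail_right b k lam)" "0 \<le> L * (k * tail_left b k lam)" "\<bar>L * D\<bar> = L * \<bar>D\<bar>"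
        using L0 k tails by (simp_all add: abs_mult)
      thus "\<bar>X\<bar> \<le> L * \<bar>D\<bar> + L * (k * tail_right b k lam) + L * (k * tail_left b k lam)"
        using abs_ge_self[of "L * D"] abs_ge_minus_self[of "L * D"]
        unfolding X_def abs_le_iff by (intro conjI; linarith)
    qed auto
    also have "\<dots> \<le> 2 / pi * (c0 powr (-b) * (4 * pkernel_const b * E) + E / (2*(1-b)*c0) + E / (2*b))"
    proof -
      have "L * \<bar>D\<bar> \<le> c0 powr (-b) * (4 * pkernel_const b * E)"
        using b c0 lam L0 pkernel_trapezoid_error[OF b k] unfolding L_def D_def E_def
        by (intro mult_mono powr_mono2') auto
      moreover have "L * (k * tail_right b k lam) \<le> E / (2*(1-b)*c0)"
        using tail_right_le[OF b k(1) lam0] b lam c0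
        unfolding L_def E_def by (auto elim!: order_trans intro!: divide_left_mono)
      ultimately show ?thesis
        using tail_left_le[OF b k(1) lam0] unfolding L_def E_def by (intro mult_left_mono add_mono) auto
    qed
    also have "\<dots> = C * E" unfolding C_def by (simp add: algebra_simps)
    finally show ?thesis by (simp add: L_def E_def)
  qed
  ultimately show ?thesis by blast
qed

section \<open>Traces in an orthonormal basis\<close>

lemma span_image_atLeast_1_imp_initial:
  fixes e :: "nat \<Rightarrow> 'a::real_vector"
  assumes "z \<in> span (e ` {1..})"
  shows "\<exists>M. z \<in> span (e ` {1..M})"
proof -
  define U where "U = {z. \<exists>M. z \<in> span (e ` {1..M})}"
  have mono: "span (e ` {1..M}) \<subseteq> span (e ` {1..n})" if "M \<le> n" for M n
    using that by (intro span_mono image_mono) auto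
  have "subspace U"
    unfolding subspace_def
  proof (intro conjI allI impI ballI)
    show "0 \<in> U" by (auto simp: U_def intro: span_zero)
    fix x y assume "x \<in> U" "y \<in> U"
    then obtain M1 M2 where "x \<in> span (e ` {1..M1})" "y \<in> span (e ` {1..M2})" by (auto simp: U_def)
    hence "x \<in> span (e ` {1..max M1 M2})" "y \<in> span (e ` {1..max M1 M2})"
      using mono[of M1 "max M1 M2"] mono[of M2 "max M1 M2"] by auto
    thus "x + y \<in> U" by (auto simp: U_def intro: span_add)
  next
    fix c x assume "x \<in> U"
    thus "c *\<^sub>R x \<in> U" by (auto simp: U_def intro: span_scale)
  qed
  moreover have "e ` {1..} \<subseteq> U"
    by (force simp: U_def intro: span_base)
  ultimately have "span (e ` {1..}) \<subseteq> U" by (intro span_minimal)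
  thus ?thesis using assms by (auto simp: U_def)
qed

lemma norm_diff_partial_expansion_le:
  fixes e :: "nat \<Rightarrow> 'a::real_inner"
  assumes e_orth: "\<And>i j. i \<ge> 1 \<Longrightarrow> j \<ge> 1 \<Longrightarrow> inner (e i) (e j) = (if i = j then 1 else 0)"
      and z: "z \<in> span (e ` {1..n})"
  shows "norm (x - (\<Sum>j<n. inner x (e (Suc j)) *\<^sub>R e (Suc j))) \<le> norm (x - z)"
proof -
  define P where "P = (\<Sum>j<n. inner x (e (Suc j)) *\<^sub>R e (Suc j))"
  have "inner (x - P) (e i) = 0" if "i \<in> {1..n}" for i
  proof -
    define i' where "i' = i - 1"
    have i': "i = Suc i'" "i' < n" using that by (auto simp: i'_def)
    have "inner P (e (Suc i')) = (\<Sum>j<n. inner x (e (Suc j)) * (if j = i' then 1 else 0))"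
      unfolding P_def by (simp add: inner_sum_left e_orth)
    also have "\<dots> = inner x (e (Suc i'))" using i' by (simp add: if_distrib sum.delta cong: if_cong)
    finally show ?thesis using i' by (simp add: inner_diff_left)
  qed
  hence orth: "span (e ` {1..n}) \<subseteq> {y. orthogonal (x - P) y}"
    by (intro span_minimal subspace_orthogonal_to_vector) (auto simp: orthogonal_def)
  have "P \<in> span (e ` {1..n})"
    unfolding P_def by (intro span_sum span_scale span_base) auto
  hence "P - z \<in> span (e ` {1..n})" using z by (rule span_diff)
  hence "(norm (x - z))^2 = (norm (x - P))^2 + (norm (P - z))^2"
    using orth norm_add_Pythagorean[of "x - P" "P - z"] by auto
  hence "(norm (x - P))^2 \<le> (norm (x - z))^2" by simp
  thus ?thesis unfolding P_def by (rule power2_le_imp_le) simp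
qed

lemma parseval_sums:
  fixes e :: "nat \<Rightarrow> 'a::real_inner"
  assumes e_orth: "\<And>i j. i \<ge> 1 \<Longrightarrow> j \<ge> 1 \<Longrightarrow> inner (e i) (e j) = (if i = j then 1 else 0)"
      and e_complete: "closure (span (e ` {1..})) = UNIV"
  shows "(\<lambda>j. inner x (e (Suc j)) * inner y (e (Suc j))) sums inner x y"
proof -
  define P where "P = (\<lambda>n. \<Sum>j<n. inner x (e (Suc j)) *\<^sub>R e (Suc j))"
  have "P \<longlonglongrightarrow> x"
  proof (rule LIMSEQ_I)
    fix r :: real assume r: "r > 0"
    have "x \<in> closure (span (e ` {1..}))" using e_complete by simp
    then obtain z where z: "z \<in> span (e ` {1..})" "dist z x < r" using r closure_approachable by blast
    obtain M where M: "z \<in> span (e ` {1..M})" using span_image_atLeast_1_imp_initial[OF z(1)] by blast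
    show "\<exists>no. \<forall>n\<ge>no. norm (P n - x) < r"
    proof (intro exI allI impI)
      fix n assume "M \<le> n"
      hence "e ` {1..M} \<subseteq> e ` {1..n}" by auto
      hence "z \<in> span (e ` {1..n})" using M span_mono by blast
      hence "norm (x - P n) \<le> norm (x - z)"
        unfolding P_def by (intro norm_diff_partial_expansion_le e_orth)
      also have "norm (x - z) < r" using z(2) by (simp add: dist_norm norm_minus_commute)
      finally show "norm (P n - x) < r" by (simp add: norm_minus_commute)
    qed
  qed
  hence "(\<lambda>n. inner (P n) y) \<longlonglongrightarrow> inner x y" by (intro tendsto_intros)
  moreover have "inner (P n) y = (\<Sum>j<n. inner x (e (Suc j)) * inner y (e (Suc j)))" for n
    unfolding P_def by (simp add: inner_sum_left inner_sum_right inner_commute)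
  ultimately show ?thesis unfolding sums_def by simp
qed

lemma trace_on_finite_rank:
  fixes e :: "nat \<Rightarrow> 'a::real_inner"
  assumes e_orth: "\<And>i j. i \<ge> 1 \<Longrightarrow> j \<ge> 1 \<Longrightarrow> inner (e i) (e j) = (if i = j then 1 else 0)"
      and e_complete: "closure (span (e ` {1..})) = UNIV"
      and T: "bounded_linear T" and fin: "finite I"
  shows "trace_on e (\<lambda>x. T (\<Sum>i\<in>I. (\<delta> i * inner x (u i)) *\<^sub>R u i)) = (\<Sum>i\<in>I. \<delta> i * inner (T (u i)) (u i))"
proof -
  interpret T: bounded_linear T by (rule T)
  have trm: "inner (T (\<Sum>i\<in>I. (\<delta> i * inner x (u i)) *\<^sub>R u i)) x =
              (\<Sum>i\<in>I. \<delta> i * (inner (u i) x * inner (T (u i)) x))" for x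
    by (simp add: T.sum T.scaleR inner_sum_left inner_sum_right inner_commute mult_ac)
  have "(\<lambda>j. \<Sum>i\<in>I. \<delta> i * (inner (u i) (e (Suc j)) * inner (T (u i)) (e (Suc j)))) sums
          (\<Sum>i\<in>I. \<delta> i * inner (u i) (T (u i)))"
    by (intro sums_sum sums_mult parseval_sums[OF e_orth e_complete])
  hence "trace_on e (\<lambda>x. T (\<Sum>i\<in>I. (\<delta> i * inner x (u i)) *\<^sub>R u i)) = (\<Sum>i\<in>I. \<delta> i * inner (u i) (T (u i)))"
    unfolding trace_on_def trm by (rule sums_unique[symmetric])
  thus ?thesis by (simp add: inner_commute)
qed

lemma abs_inner_le_onorm:
  assumes "bounded_linear T" "norm u = 1"
  shows "\<bar>inner (T u) u\<bar> \<le> onorm T"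
proof -
  have "\<bar>inner (T u) u\<bar> \<le> norm (T u) * norm u" by (rule Cauchy_Schwarz_ineq2)
  also have "\<dots> \<le> onorm T * norm u * norm u"
    using onorm[OF assms(1), of u] by (intro mult_right_mono) auto
  finally show ?thesis using assms(2) by simp
qed

section \<open>The discrete operators in the Galerkin eigenbasis\<close>

lemma abs_square_diff_le:
  fixes q p E w :: real
  assumes "\<bar>q - p\<bar> \<le> E" "0 \<le> p" "p \<le> w"
  shows "\<bar>q\<^sup>2 - p\<^sup>2\<bar> \<le> E\<^sup>2 + 2 * E * w"
proof -
  have "\<bar>q\<^sup>2 - p\<^sup>2\<bar> = \<bar>q - p\<bar> * \<bar>(q - p) + 2 * p\<bar>"
    by (simp add: power2_eq_square abs_mult[symmetric] algebra_simps)
  also have "\<dots> \<le> E * (E + 2 * w)"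
    using assms by (intro mult_mono) auto
  finally show ?thesis by (simp add: power2_eq_square algebra_simps)
qed

locale galerkin_eigensystem =
  fixes e :: "nat \<Rightarrow> 'a::{real_inner, complete_space}" and lam :: "nat \<Rightarrow> real"
    and V :: "'a set" and N :: nat and Lh :: "'a \<Rightarrow> 'a"
    and eh :: "nat \<Rightarrow> 'a" and lamh :: "nat \<Rightarrow> real"
  assumes e_orth: "\<And>i j. i \<ge> 1 \<Longrightarrow> j \<ge> 1 \<Longrightarrow> inner (e i) (e j) = (if i = j then 1 else 0)"
    and e_complete: "closure (span (e ` {1..})) = UNIV"
    and lam_pos: "\<And>j. j \<ge> 1 \<Longrightarrow> lam j > 0"
    and V_sub: "subspace V" "V \<subseteq> domL12 e lam"
    and Lh_def: "\<And>\<psi> \<phi>. \<psi> \<in> V \<Longrightarrow> \<phi> \<in> V \<Longrightarrow> Lh \<psi> \<in> V \<and> inner (Lh \<psi>) \<phi> = formL e lam \<psi> \<phi>"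
    and eh_orth: "\<And>i j. i \<in> {1..N} \<Longrightarrow> j \<in> {1..N} \<Longrightarrow> inner (eh i) (eh j) = (if i = j then 1 else 0)"
    and eh_eig: "\<And>j. j \<in> {1..N} \<Longrightarrow> eh j \<in> V \<and> Lh (eh j) = lamh j *\<^sub>R eh j"
    and lamh_pos: "\<And>j. j \<in> {1..N} \<Longrightarrow> lamh j > 0"
begin

lemma summable_formL:
  assumes "x \<in> domL12 e lam" "y \<in> domL12 e lam"
  shows "summable (\<lambda>j. lam (Suc j) * inner x (e (Suc j)) * inner y (e (Suc j)))"
proof -
  have sx: "summable (\<lambda>j. lam (Suc j) * (inner x (e (Suc j)))\<^sup>2)" using assms(1) by (simp add: domL12_def)
  have sy: "summable (\<lambda>j. lam (Suc j) * (inner y (e (Suc j)))\<^sup>2)" using assms(2) by (simp add: domL12_def)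
  have s: "summable (\<lambda>j. (lam (Suc j) * (inner x (e (Suc j)))\<^sup>2 + lam (Suc j) * (inner y (e (Suc j)))\<^sup>2) / 2)"
    by (intro summable_divide summable_add sx sy)
  show ?thesis
  proof (rule summable_comparison_test'[OF s])
    fix n
    define a where "a = inner x (e (Suc n))"
    define b where "b = inner y (e (Suc n))"
    have l: "lam (Suc n) > 0" by (rule lam_pos) simp
    have "\<bar>a * b\<bar> \<le> (a^2 + b^2) / 2"
    proof -
      have "0 \<le> (\<bar>a\<bar> - \<bar>b\<bar>)^2" by simp
      hence "2 * (\<bar>a\<bar> * \<bar>b\<bar>) \<le> \<bar>a\<bar>^2 + \<bar>b\<bar>^2" by (simp add: power2_eq_square algebra_simps)
      thus ?thesis by (simp add: abs_mult)
    qed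
    hence "lam (Suc n) * \<bar>a * b\<bar> \<le> lam (Suc n) * ((a^2 + b^2) / 2)"
      using l by (intro mult_left_mono) auto
    thus "norm (lam (Suc n) * inner x (e (Suc n)) * inner y (e (Suc n))) \<le>
          (lam (Suc n) * (inner x (e (Suc n)))\<^sup>2 + lam (Suc n) * (inner y (e (Suc n)))\<^sup>2) / 2"
      using l unfolding a_def[symmetric] b_def[symmetric] by (simp add: abs_mult algebra_simps)
  qed
qed

lemma formL_sum:
  assumes fin: "finite J" and x: "\<And>j. j \<in> J \<Longrightarrow> x j \<in> V" and y: "y \<in> V"
  shows "formL e lam (\<Sum>j\<in>J. c j *\<^sub>R x j) y = (\<Sum>j\<in>J. c j * formL e lam (x j) y)"
proof -
  have s: "summable (\<lambda>i. lam (Suc i) * inner (x j) (e (Suc i)) * inner y (e (Suc i)))" if "j \<in> J" for j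
    by (intro summable_formL V_sub(2)[THEN subsetD] x y that)
  have "formL e lam (\<Sum>j\<in>J. c j *\<^sub>R x j) y =
        (\<Sum>i. \<Sum>j\<in>J. c j * (lam (Suc i) * inner (x j) (e (Suc i)) * inner y (e (Suc i))))"
    unfolding formL_def by (simp add: inner_sum_left sum_distrib_left sum_distrib_right algebra_simps)
  also have "\<dots> = (\<Sum>j\<in>J. \<Sum>i. c j * (lam (Suc i) * inner (x j) (e (Suc i)) * inner y (e (Suc i))))"
    by (rule suminf_sum) (intro summable_mult s)
  also have "\<dots> = (\<Sum>j\<in>J. c j * formL e lam (x j) y)"
    unfolding formL_def by (auto intro!: sum.cong suminf_mult s)
  finally show ?thesis .
qed

lemma formL_nonneg:
  assumes "x \<in> V" shows "formL e lam x x \<ge> 0"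
proof -
  have "summable (\<lambda>j. lam (Suc j) * inner x (e (Suc j)) * inner x (e (Suc j)))"
    by (intro summable_formL V_sub(2)[THEN subsetD] assms)
  moreover have "lam (Suc j) * inner x (e (Suc j)) * inner x (e (Suc j)) \<ge> 0" for j
    using lam_pos[of "Suc j"] by (simp add: mult.assoc)
  ultimately show ?thesis unfolding formL_def by (intro suminf_nonneg) auto
qed

lemma eh_in_V: "j \<in> {1..N} \<Longrightarrow> eh j \<in> V" using eh_eig by blast

lemma sum_eh_in_V: "(\<Sum>j\<in>{1..N}. c j *\<^sub>R eh j) \<in> V"
  using V_sub(1) by (intro subspace_sum subspace_scale eh_in_V) auto

lemma Lh_sum_eh:
  "Lh (\<Sum>j\<in>{1..N}. c j *\<^sub>R eh j) = (\<Sum>j\<in>{1..N}. (c j * lamh j) *\<^sub>R eh j)"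
proof -
  define w where "w = (\<Sum>j\<in>{1..N}. c j *\<^sub>R eh j)"
  define r where "r = (\<Sum>j\<in>{1..N}. (c j * lamh j) *\<^sub>R eh j)"
  have wV: "w \<in> V" unfolding w_def by (rule sum_eh_in_V)
  have rV: "r \<in> V" unfolding r_def by (rule sum_eh_in_V)
  have LwV: "Lh w \<in> V" using Lh_def[OF wV wV] by blast
  have dV: "Lh w - r \<in> V" using V_sub(1) LwV rV by (rule subspace_diff)
  have "inner (Lh w - r) \<phi> = 0" if \<phi>: "\<phi> \<in> V" for \<phi>
  proof -
    have "inner (Lh w) \<phi> = formL e lam w \<phi>" using Lh_def[OF wV \<phi>] by blast
    also have "\<dots> = (\<Sum>j\<in>{1..N}. c j * formL e lam (eh j) \<phi>)"
      unfolding w_def by (rule formL_sum) (auto intro: eh_in_V \<phi>)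
    also have "\<dots> = (\<Sum>j\<in>{1..N}. c j * (lamh j * inner (eh j) \<phi>))"
    proof (rule sum.cong[OF refl])
      fix j assume j: "j \<in> {1..N}"
      have "formL e lam (eh j) \<phi> = inner (Lh (eh j)) \<phi>" using Lh_def[OF eh_in_V[OF j] \<phi>] by simp
      also have "\<dots> = lamh j * inner (eh j) \<phi>" using eh_eig[OF j] by simp
      finally show "c j * formL e lam (eh j) \<phi> = c j * (lamh j * inner (eh j) \<phi>)" by simp
    qed
    also have "\<dots> = inner r \<phi>" unfolding r_def by (simp add: inner_sum_left mult.assoc)
    finally show ?thesis by (simp add: inner_diff_left)
  qed
  hence "Lh w - r = 0" using dV by (metis inner_eq_zero_iff)
  thus ?thesis unfolding w_def r_def by simp
qed

lemma formL_diff: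
  assumes "v \<in> V" "w \<in> V" "\<phi> \<in> V"
  shows "formL e lam (v - w) \<phi> = formL e lam v \<phi> - formL e lam w \<phi>"
proof -
  have s: "summable (\<lambda>j. lam (Suc j) * inner x (e (Suc j)) * inner \<phi> (e (Suc j)))" if "x \<in> V" for x
    using that assms(3) by (intro summable_formL V_sub(2)[THEN subsetD])
  show ?thesis unfolding formL_def suminf_diff[OF s[OF assms(1)] s[OF assms(2)]]
    by (rule suminf_cong) (simp add: inner_diff_left algebra_simps)
qed

lemma Lh_diff:
  assumes "v \<in> V" "w \<in> V" shows "Lh (v - w) = Lh v - Lh w"
proof -
  have vw: "v - w \<in> V" using V_sub(1) assms by (rule subspace_diff)
  have dV: "Lh (v - w) - (Lh v - Lh w) \<in> V"
    using V_sub(1) Lh_def[OF vw vw] Lh_def[OF assms(1) assms(1)] Lh_def[OF assms(2) assms(2)]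
    by (intro subspace_diff) auto
  have "inner (Lh (v - w) - (Lh v - Lh w)) \<phi> = 0" if \<phi>: "\<phi> \<in> V" for \<phi>
    using Lh_def[OF vw \<phi>] Lh_def[OF assms(1) \<phi>] Lh_def[OF assms(2) \<phi>] formL_diff[OF assms \<phi>]
    by (simp add: inner_diff_left)
  thus ?thesis using dV by (metis inner_eq_zero_iff right_minus_eq)
qed

lemma resolv_sum_eh:
  assumes t: "t > 0"
  shows "resolv V Lh t (\<Sum>j\<in>{1..N}. c j *\<^sub>R eh j) = (\<Sum>j\<in>{1..N}. (c j / (1 + t * lamh j)) *\<^sub>R eh j)"
proof -
  define w where "w = (\<Sum>j\<in>{1..N}. c j *\<^sub>R eh j)"
  define v where "v = (\<Sum>j\<in>{1..N}. (c j / (1 + t * lamh j)) *\<^sub>R eh j)"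
  have vV: "v \<in> V" unfolding v_def by (rule sum_eh_in_V)
  have sol: "v + t *\<^sub>R Lh v = w"
  proof -
    have "Lh v = (\<Sum>j\<in>{1..N}. (c j / (1 + t * lamh j) * lamh j) *\<^sub>R eh j)"
      unfolding v_def by (rule Lh_sum_eh)
    hence "v + t *\<^sub>R Lh v = (\<Sum>j\<in>{1..N}. (c j / (1 + t * lamh j) + t * (c j / (1 + t * lamh j) * lamh j)) *\<^sub>R eh j)"
      unfolding v_def by (simp add: scaleR_sum_right sum.distrib[symmetric] scaleR_add_left)
    also have "\<dots> = w" unfolding w_def
    proof (rule sum.cong[OF refl])
      fix j assume j: "j \<in> {1..N}"
      have D: "1 + t * lamh j > 0" using t lamh_pos[OF j] by (simp add: add_pos_pos)
      have g: "X + t * (X * lamh j) = X * (1 + t * lamh j)" for X by (simp add: algebra_simps)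
      have "c j / (1 + t * lamh j) + t * (c j / (1 + t * lamh j) * lamh j) = c j / (1 + t * lamh j) * (1 + t * lamh j)"
        by (rule g)
      also have "\<dots> = c j" using D by simp
      finally have "c j / (1 + t * lamh j) + t * (c j / (1 + t * lamh j) * lamh j) = c j" .
      thus "(c j / (1 + t * lamh j) + t * (c j / (1 + t * lamh j) * lamh j)) *\<^sub>R eh j = c j *\<^sub>R eh j" by simp
    qed
    finally show ?thesis .
  qed
  have uniq: "u = v" if uV: "u \<in> V" and u: "u + t *\<^sub>R Lh u = w" for u
  proof -
    define d where "d = u - v"
    have dV: "d \<in> V" unfolding d_def using V_sub(1) uV vV by (rule subspace_diff)
    have "d + t *\<^sub>R Lh d = (u + t *\<^sub>R Lh u) - (v + t *\<^sub>R Lh v)"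
      unfolding d_def Lh_diff[OF uV vV] by (simp add: algebra_simps)
    also have "\<dots> = 0" unfolding u sol by simp
    finally have "d + t *\<^sub>R Lh d = 0" .
    hence "inner (d + t *\<^sub>R Lh d) d = 0" by simp
    hence "inner d d + t * formL e lam d d = 0"
      using Lh_def[OF dV dV] by (simp add: inner_add_left)
    moreover have "formL e lam d d \<ge> 0" by (rule formL_nonneg[OF dV])
    moreover have "t * formL e lam d d \<ge> 0" using t calculation(2) by (intro mult_nonneg_nonneg) auto
    ultimately have "inner d d \<le> 0" by linarith
    hence "inner d d = 0" using inner_ge_zero[of d] by linarith
    hence "d = 0" by simp
    thus ?thesis by (simp add: d_def)
  qed
  have "(THE u. u \<in> V \<and> u + t *\<^sub>R Lh u = w) = v"
  proof (rule the_equality)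
    show "v \<in> V \<and> v + t *\<^sub>R Lh v = w" using vV sol by blast
    fix u assume "u \<in> V \<and> u + t *\<^sub>R Lh u = w"
    thus "u = v" using uniq by blast
  qed
  thus ?thesis unfolding resolv_def w_def v_def .
qed

end

context galerkin_eigensystem begin

definition diag_op :: "(nat \<Rightarrow> real) \<Rightarrow> 'a \<Rightarrow> 'a" where
  "diag_op c g = (\<Sum>j\<in>{1..N}. (c j * inner g (e j)) *\<^sub>R eh j)"

lemma Qop_Pitilde_eq_diag_op: "Qop V Lh \<beta> k \<circ> Pitilde e eh N = diag_op (\<lambda>j. sinc_quad \<beta> k (lamh j))"
proof (rule ext)
  fix g
  define c where "c = (\<lambda>j. inner g (e j))"
  define K where "K = {- Kminus \<beta> k .. Kplus \<beta> k}"
  have "(Qop V Lh \<beta> k \<circ> Pitilde e eh N) g =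
        (2 * k * sin (pi * \<beta>) / pi) *\<^sub>R (\<Sum>l\<in>K. exp (2 * \<beta> * (of_int l * k)) *\<^sub>R
            (\<Sum>j\<in>{1..N}. (c j / (1 + exp (2 * (of_int l * k)) * lamh j)) *\<^sub>R eh j))"
    unfolding Qop_def Pitilde_def comp_def K_def[symmetric] c_def[symmetric]
    by (simp only: resolv_sum_eh[OF exp_gt_zero] c_def)
  also have "\<dots> = (\<Sum>j\<in>{1..N}. ((2 * k * sin (pi * \<beta>) / pi) *
        (\<Sum>l\<in>K. exp (2 * \<beta> * (of_int l * k)) / (1 + exp (2 * (of_int l * k)) * lamh j)) * c j) *\<^sub>R eh j)"
    by (simp add: scaleR_sum_right scaleR_sum_left sum_distrib_left sum_distrib_right sum.swap[of _ K]
                  mult_ac divide_inverse)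
  also have "\<dots> = diag_op (\<lambda>j. sinc_quad \<beta> k (lamh j)) g" unfolding diag_op_def sinc_quad_def K_def c_def by simp
  finally show "(Qop V Lh \<beta> k \<circ> Pitilde e eh N) g = diag_op (\<lambda>j. sinc_quad \<beta> k (lamh j)) g" .
qed

lemma inner_Pitilde_eh: "j \<in> {1..N} \<Longrightarrow> inner (Pitilde e eh N g) (eh j) = inner g (e j)"
proof -
  assume j: "j \<in> {1..N}"
  have "inner (Pitilde e eh N g) (eh j) = (\<Sum>i\<in>{1..N}. inner g (e i) * (if i = j then 1 else 0))"
    unfolding Pitilde_def by (simp add: inner_sum_left eh_orth[OF _ j])
  also have "\<dots> = inner g (e j)" using j by (simp add: if_distrib sum.delta cong: if_cong)
  finally show ?thesis .
qed

lemma fracpow_Pitilde_eq_diag_op: "fracpow eh lamh N \<beta> \<circ> Pitilde e eh N = diag_op (\<lambda>j. lamh j powr (-\<beta>))"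
proof (rule ext)
  fix g
  show "(fracpow eh lamh N \<beta> \<circ> Pitilde e eh N) g = diag_op (\<lambda>j. lamh j powr (-\<beta>)) g"
    unfolding fracpow_def diag_op_def comp_def by (intro sum.cong refl) (simp add: inner_Pitilde_eh)
qed

lemma hadjoint_diag_op: "hadjoint (diag_op c) y = (\<Sum>j\<in>{1..N}. (c j * inner y (eh j)) *\<^sub>R e j)"
proof -
  define z where "z = (\<Sum>j\<in>{1..N}. (c j * inner y (eh j)) *\<^sub>R e j)"
  have zp: "inner (diag_op c x) y = inner x z" for x
    unfolding diag_op_def z_def
    by (simp add: inner_sum_left inner_sum_right mult_ac inner_commute)
  have "(THE z. \<forall>x. inner (diag_op c x) y = inner x z) = z"
  proof (rule the_equality)
    show "\<forall>x. inner (diag_op c x) y = inner x z" using zp by blast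
    fix z' assume h: "\<forall>x. inner (diag_op c x) y = inner x z'"
    have "inner (z' - z) z' = inner (z' - z) z" using h zp by metis
    hence "inner (z' - z) (z' - z) = 0" by (simp add: inner_diff_right)
    thus "z' = z" by simp
  qed
  thus ?thesis unfolding hadjoint_def z_def .
qed

lemma diag_op_hadjoint: "diag_op c (hadjoint (diag_op c) y) = (\<Sum>i\<in>{1..N}. ((c i)^2 * inner y (eh i)) *\<^sub>R eh i)"
proof -
  have "inner (hadjoint (diag_op c) y) (e i) = c i * inner y (eh i)" if i: "i \<in> {1..N}" for i
  proof -
    have "inner (hadjoint (diag_op c) y) (e i) = (\<Sum>j\<in>{1..N}. c j * inner y (eh j) * (if j = i then 1 else 0))"
      unfolding hadjoint_diag_op using i by (simp add: inner_sum_left e_orth)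
    also have "\<dots> = c i * inner y (eh i)" using i by (simp add: if_distrib sum.delta cong: if_cong)
    finally show ?thesis .
  qed
  thus ?thesis unfolding diag_op_def[of c "hadjoint (diag_op c) y"]
    by (intro sum.cong refl) (simp add: power2_eq_square mult_ac)
qed

lemma diag_op_hadjoint_diff:
  "diag_op c (hadjoint (diag_op c) y) - diag_op c' (hadjoint (diag_op c') y) =
     (\<Sum>i\<in>{1..N}. (((c i)^2 - (c' i)^2) * inner y (eh i)) *\<^sub>R eh i)"
  unfolding diag_op_hadjoint by (simp add: sum_subtractf[symmetric] scaleR_diff_left algebra_simps)

lemma trace_Qop_fracpow_eq:
  fixes \<beta> k :: real
  assumes T: "bounded_linear T"
  defines "Qt \<equiv> Qop V Lh \<beta> k \<circ> Pitilde e eh N" and "Lt \<equiv> fracpow eh lamh N \<beta> \<circ> Pitilde e eh N"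
  shows "trace_on e (\<lambda>x. T (Qt (hadjoint Qt x) - Lt (hadjoint Lt x))) =
           (\<Sum>i\<in>{1..N}. ((sinc_quad \<beta> k (lamh i))\<^sup>2 - (lamh i powr (-\<beta>))\<^sup>2) * inner (T (eh i)) (eh i))"
  unfolding Qt_def Lt_def Qop_Pitilde_eq_diag_op fracpow_Pitilde_eq_diag_op diag_op_hadjoint_diff
  by (rule trace_on_finite_rank[OF e_orth e_complete T finite_atLeastAtMost])

lemma trace_Qop_fracpow_le:
  fixes \<beta> k :: real
  assumes T: "bounded_linear T" and E: "0 \<le> E"
      and err: "\<And>i. i \<in> {1..N} \<Longrightarrow> \<bar>sinc_quad \<beta> k (lamh i) - lamh i powr (-\<beta>)\<bar> \<le> E"
      and w: "\<And>i. i \<in> {1..N} \<Longrightarrow> lamh i powr (-\<beta>) \<le> w i"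
  defines "Qt \<equiv> Qop V Lh \<beta> k \<circ> Pitilde e eh N" and "Lt \<equiv> fracpow eh lamh N \<beta> \<circ> Pitilde e eh N"
  shows "\<bar>trace_on e (\<lambda>x. T (Qt (hadjoint Qt x) - Lt (hadjoint Lt x)))\<bar>
           \<le> (real N * E\<^sup>2 + 2 * E * (\<Sum>i\<in>{1..N}. w i)) * onorm T"
proof -
  have "\<bar>trace_on e (\<lambda>x. T (Qt (hadjoint Qt x) - Lt (hadjoint Lt x)))\<bar>
      \<le> (\<Sum>i\<in>{1..N}. \<bar>(sinc_quad \<beta> k (lamh i))\<^sup>2 - (lamh i powr (-\<beta>))\<^sup>2\<bar> * \<bar>inner (T (eh i)) (eh i)\<bar>)"
    unfolding Qt_def Lt_def trace_Qop_fracpow_eq[OF T] abs_mult[symmetric] by (rule sum_abs)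
  also have "\<dots> \<le> (\<Sum>i\<in>{1..N}. (E\<^sup>2 + 2 * E * w i) * onorm T)"
  proof (rule sum_mono, rule mult_mono)
    fix i assume i: "i \<in> {1..N}"
    show "\<bar>(sinc_quad \<beta> k (lamh i))\<^sup>2 - (lamh i powr (-\<beta>))\<^sup>2\<bar> \<le> E\<^sup>2 + 2 * E * w i"
      using abs_square_diff_le[OF err[OF i] powr_ge_zero w[OF i]] .
    show "\<bar>inner (T (eh i)) (eh i)\<bar> \<le> onorm T"
      using eh_orth[OF i i] by (intro abs_inner_le_onorm T) (simp add: norm_eq_sqrt_inner)
    show "0 \<le> E\<^sup>2 + 2 * E * w i"
      using E order_trans[OF powr_ge_zero w[OF i]] by (intro add_nonneg_nonneg mult_nonneg_nonneg) auto
  qed simp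
  also have "\<dots> = (real N * E\<^sup>2 + 2 * E * (\<Sum>i\<in>{1..N}. w i)) * onorm T"
    by (simp add: sum.distrib sum_distrib_left[symmetric] sum_distrib_right[symmetric])
  finally show ?thesis .
qed

lemma trace_Qop_fracpow_le_powr_sum:
  fixes \<beta> k c \<alpha> E :: real
  assumes T: "bounded_linear T" and c: "0 < c" and "0 < \<beta>" "0 \<le> \<alpha>" and E: "0 \<le> E"
      and lamh_ge: "\<And>i. i \<in> {1..N} \<Longrightarrow> c * real i powr \<alpha> \<le> lamh i"
      and err: "\<And>l. c \<le> l \<Longrightarrow> \<bar>sinc_quad \<beta> k l - l powr (-\<beta>)\<bar> \<le> E"
  defines "Qt \<equiv> Qop V Lh \<beta> k \<circ> Pitilde e eh N" and "Lt \<equiv> fracpow eh lamh N \<beta> \<circ> Pitilde e eh N"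
  shows "\<bar>trace_on e (\<lambda>x. T (Qt (hadjoint Qt x) - Lt (hadjoint Lt x)))\<bar>
           \<le> (real N * E\<^sup>2 + 2 * E * (c powr (-\<beta>) * (\<Sum>i\<in>{1..N}. real i powr (-(\<alpha> * \<beta>))))) * onorm T"
proof -
  have "\<bar>trace_on e (\<lambda>x. T (Qt (hadjoint Qt x) - Lt (hadjoint Lt x)))\<bar>
      \<le> (real N * E\<^sup>2 + 2 * E * (\<Sum>i\<in>{1..N}. c powr (-\<beta>) * real i powr (-(\<alpha> * \<beta>)))) * onorm T"
    unfolding Qt_def Lt_def
  proof (rule trace_Qop_fracpow_le[OF T E])
    fix i assume i: "i \<in> {1..N}"
    have "c \<le> c * real i powr \<alpha>" using c i \<open>0 \<le> \<alpha>\<close> by (simp add: ge_one_powr_ge_zero)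
    thus "\<bar>sinc_quad \<beta> k (lamh i) - lamh i powr (-\<beta>)\<bar> \<le> E"
      using err order_trans lamh_ge[OF i] by blast
    have "lamh i powr (-\<beta>) \<le> (c * real i powr \<alpha>) powr (-\<beta>)"
      using lamh_ge[OF i] c i \<open>0 < \<beta>\<close> by (intro powr_mono2') auto
    thus "lamh i powr (-\<beta>) \<le> c powr (-\<beta>) * real i powr (-(\<alpha> * \<beta>))"
      using c i by (simp add: powr_mult powr_powr)
  qed
  thus ?thesis by (simp add: sum_distrib_left)
qed

end

section \<open>Partial sums of \<open>j powr -p\<close> and the main estimate\<close>

definition powr_primitive :: "real \<Rightarrow> real \<Rightarrow> real" where
  "powr_primitive p x = (if p = 1 then ln x else x powr (1-p) / (1-p))"

lemma powr_primitive_has_real_derivative: "x > 0 \<Longrightarrow> (powr_primitive p has_real_derivative x powr (-p)) (at x)"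
proof -
  assume x: "x > 0"
  show ?thesis
  proof (cases "p = 1")
    case True
    have "(ln has_real_derivative 1/x) (at x)" using x by (auto intro!: derivative_eq_intros)
    moreover have "x powr (-p) = 1/x" using True x by (simp add: powr_minus_divide)
    ultimately show ?thesis using True by (simp add: powr_primitive_def[abs_def])
  next
    case False
    have "((\<lambda>x. x powr (1-p) / (1-p)) has_real_derivative ((1-p) * x powr (1-p-1)) / (1-p)) (at x)"
      using x by (auto intro!: derivative_eq_intros)
    moreover have "((1-p) * x powr (1-p-1)) / (1-p) = x powr (-p)" using False by simp
    ultimately show ?thesis using False by (simp add: powr_primitive_def[abs_def])
  qed
qed

lemma powr_le_powr_primitive_diff:
  assumes p: "p > 0" and x: "x \<ge> 1"
  shows "(x+1) powr (-p) \<le> powr_primitive p (x+1) - powr_primitive p x"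
proof -
  have "\<exists>z. x < z \<and> z < x+1 \<and> powr_primitive p (x+1) - powr_primitive p x = ((x+1) - x) * z powr (-p)"
    by (rule MVT2) (use x powr_primitive_has_real_derivative in auto)
  then obtain z where z: "x < z" "z < x+1" "powr_primitive p (x+1) - powr_primitive p x = z powr (-p)" by auto
  have "(x+1) powr (-p) \<le> z powr (-p)" using z x p by (intro powr_mono2') auto
  thus ?thesis using z by simp
qed

lemma sum_powr_le_primitive:
  assumes p: "p > 0" and N: "N \<ge> 1"
  shows "(\<Sum>i\<in>{1..N}. real i powr (-p)) \<le> 1 + powr_primitive p (real N) - powr_primitive p 1"
  using N
proof (induction N rule: dec_induct)
  case base
  show ?case by simp
next
  case (step n)
  have "(\<Sum>i\<in>{1..Suc n}. real i powr (-p)) = (\<Sum>i\<in>{1..n}. real i powr (-p)) + (real n + 1) powr (-p)"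
    by (simp add: add.commute)
  also have "\<dots> \<le> (1 + powr_primitive p (real n) - powr_primitive p 1) + (powr_primitive p (real n + 1) - powr_primitive p (real n))"
    using step powr_le_powr_primitive_diff[OF p, of "real n"] by (intro add_mono) auto
  finally show ?case by (simp add: add.commute)
qed

lemma powr_primitive_diff: "p \<noteq> 1 \<Longrightarrow> powr_primitive p X - powr_primitive p 1 = (X powr (1-p) - 1) / (1-p)"
  by (simp add: powr_primitive_def diff_divide_distrib)

lemma powr_primitive_diff_le_gt1:
  assumes "p > 1" "X > 0" shows "powr_primitive p X - powr_primitive p 1 \<le> 1 / (p-1)"
proof -
  have "powr_primitive p X - powr_primitive p 1 = (X powr (1-p) - 1) / (1-p)" using assms by (intro powr_primitive_diff) auto
  also have "\<dots> = (1 - X powr (1-p)) / (p-1)"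
    using minus_divide_divide[of "1 - X powr (1-p)" "p-1"] by simp
  also have "\<dots> \<le> 1 / (p-1)" using assms by (intro divide_right_mono) auto
  finally show ?thesis .
qed

lemma powr_primitive_diff_le_lt1:
  assumes "p < 1" "X > 0" shows "powr_primitive p X - powr_primitive p 1 \<le> X powr (1-p) / (1-p)"
proof -
  have "powr_primitive p X - powr_primitive p 1 = (X powr (1-p) - 1) / (1-p)" using assms by (intro powr_primitive_diff) auto
  also have "\<dots> \<le> X powr (1-p) / (1-p)" using assms by (intro divide_right_mono) auto
  finally show ?thesis .
qed

lemma sum_powr_neg_le_gt1:
  assumes p: "p > 1"
  shows "(\<Sum>i\<in>{1..N}. real i powr (-p)) \<le> 1 + 1 / (p-1)"
proof (cases "N \<ge> 1")
  case True
  have "powr_primitive p (real N) - powr_primitive p 1 \<le> 1 / (p-1)"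
    using p True by (intro powr_primitive_diff_le_gt1) auto
  thus ?thesis using sum_powr_le_primitive[of p N] p True by simp
qed (use p in simp)

lemma sum_inverse_le_ln:
  assumes c2: "c2 > 0" and h: "0 < h" "h < 1" and N: "real N \<le> c2 * h powr (- real d)"
  shows "(\<Sum>i\<in>{1..N}. real i powr (-1)) \<le> 1 + \<bar>ln c2\<bar> + real d * \<bar>ln h\<bar>"
proof (cases "N \<ge> 1")
  case True
  have "(\<Sum>i\<in>{1..N}. real i powr (-1)) \<le> 1 + ln (real N)"
    using sum_powr_le_primitive[of 1 N] True by (simp add: powr_primitive_def)
  also have "ln (real N) \<le> ln (c2 * h powr (- real d))" using True N by (subst ln_le_cancel_iff) auto
  also have "ln (c2 * h powr (- real d)) = ln c2 + real d * (- ln h)" using c2 h by (simp add: ln_mult ln_powr)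
  also have "\<dots> \<le> \<bar>ln c2\<bar> + real d * \<bar>ln h\<bar>" using h by (intro add_mono mult_left_mono) auto
  finally show ?thesis by simp
qed simp

lemma sum_powr_neg_le_lt1:
  assumes p: "0 < p" "p < 1" and c2: "c2 > 0" and h: "0 < h" "h < 1" and N: "real N \<le> c2 * h powr (- real d)"
  shows "(\<Sum>i\<in>{1..N}. real i powr (-p)) \<le> 1 + c2 powr (1-p) / (1-p) * h powr (real d * (p - 1))"
proof (cases "N \<ge> 1")
  case True
  have "powr_primitive p (real N) - powr_primitive p 1 \<le> real N powr (1-p) / (1-p)"
    using p True by (intro powr_primitive_diff_le_lt1) auto
  also have "real N powr (1-p) \<le> (c2 * h powr (- real d)) powr (1-p)"
    using p True N by (intro powr_mono2) auto
  also have "(c2 * h powr (- real d)) powr (1-p) = c2 powr (1-p) * h powr (real d * (p - 1))"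
    using c2 h by (simp add: powr_mult powr_powr algebra_simps)
  finally have "powr_primitive p (real N) - powr_primitive p 1 \<le> c2 powr (1-p) / (1-p) * h powr (real d * (p - 1))"
    using p by (simp add: divide_right_mono)
  thus ?thesis using sum_powr_le_primitive[of p N] p True by simp
qed (use p in simp)

lemma sum_powr_neg_le:
  fixes c2 \<alpha> \<beta> :: real and d :: nat
  assumes ab: "\<alpha> * \<beta> > 0" and c2: "c2 > 0"
  shows "\<exists>K1 K2. 0 \<le> K1 \<and> 0 \<le> K2 \<and> (\<forall>h (N::nat). 0 < h \<longrightarrow> h < 1 \<longrightarrow> real N \<le> c2 * h powr (- real d) \<longrightarrow>
           (\<Sum>i\<in>{1..N}. real i powr (-(\<alpha> * \<beta>))) \<le> K1 + K2 * f_ab (real d) \<alpha> \<beta> h)"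
proof -
  consider "\<alpha> * \<beta> > 1" | "\<alpha> * \<beta> = 1" | "\<alpha> * \<beta> < 1" by linarith
  thus ?thesis
  proof cases
    case 1
    thus ?thesis using sum_powr_neg_le_gt1[OF 1] by (intro exI[of _ "1 + 1 / (\<alpha> * \<beta> - 1)"] exI[of _ 0]) auto
  next
    case 2
    thus ?thesis using sum_inverse_le_ln[OF c2]
      by (intro exI[of _ "1 + \<bar>ln c2\<bar>"] exI[of _ "real d"]) (auto simp: f_ab_def)
  next
    case 3
    thus ?thesis using sum_powr_neg_le_lt1[OF ab 3 c2]
      by (intro exI[of _ 1] exI[of _ "c2 powr (1 - \<alpha> * \<beta>) / (1 - \<alpha> * \<beta>)"]) (auto simp: f_ab_def algebra_simps)
  qed
qed

lemma quadrature_error_terms_le: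
  fixes n c2 Cq cl K1 K2 S f h k :: real and d :: nat
  defines "B \<equiv> exp (- pi\<^sup>2 / (2 * k))"
  assumes n: "n \<le> c2 * h powr (- real d)" and S: "S \<le> K1 + K2 * f"
      and pos: "0 < k" "0 \<le> f" "0 \<le> c2" "0 \<le> Cq" "0 \<le> cl" "0 \<le> K1" "0 \<le> K2"
  shows "n * (Cq * B)\<^sup>2 + 2 * (Cq * B) * (cl * S)
           \<le> (c2 * Cq\<^sup>2 + 2 * Cq * cl * (K1 + K2) + 1) * (exp (- pi\<^sup>2 / k) * h powr (- real d) + B + B * f)"
proof -
  define A where "A = exp (- pi\<^sup>2 / k) * h powr (- real d)"
  define C where "C = c2 * Cq\<^sup>2 + 2 * Cq * cl * (K1 + K2) + 1"
  have B: "0 < B" "B\<^sup>2 = exp (- pi\<^sup>2 / k)"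
    using pos(1) by (simp_all add: B_def power2_eq_square exp_add[symmetric] field_simps)
  have "n * (Cq * B)\<^sup>2 \<le> c2 * h powr (- real d) * (Cq * B)\<^sup>2" using n by (intro mult_right_mono) auto
  also have "\<dots> = c2 * Cq\<^sup>2 * A" using B(2) by (simp add: A_def power_mult_distrib)
  finally have 1: "n * (Cq * B)\<^sup>2 \<le> c2 * Cq\<^sup>2 * A" .
  have "2 * (Cq * B) * (cl * S) \<le> 2 * (Cq * B) * (cl * (K1 + K2 * f))"
    using S pos B by (intro mult_left_mono) auto
  hence 2: "2 * (Cq * B) * (cl * S) \<le> 2 * Cq * cl * K1 * B + 2 * Cq * cl * K2 * (B * f)"
    by (simp add: algebra_simps)
  have "c2 * Cq\<^sup>2 * A + 2 * Cq * cl * K1 * B + 2 * Cq * cl * K2 * (B * f) \<le> C * A + C * B + C * (B * f)"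
    unfolding C_def using pos B by (intro add_mono mult_right_mono) (auto simp: A_def algebra_simps)
  thus ?thesis using 1 2 by (simp add: A_def C_def distrib_left)
qed

theorem lemma3p8:
  fixes e :: "nat \<Rightarrow> 'a::{real_inner, complete_space}"
    and lam :: "nat \<Rightarrow> real"
    and \<alpha> clam Clam \<beta> :: real
    and V :: "real \<Rightarrow> 'a set" and N :: "real \<Rightarrow> nat"
    and Lh :: "real \<Rightarrow> 'a \<Rightarrow> 'a"
    and eh :: "real \<Rightarrow> nat \<Rightarrow> 'a" and lamh :: "real \<Rightarrow> nat \<Rightarrow> real"
    and d :: nat and C1 C2 h0 r s q :: real
  assumes e_orth: "\<And>i j. i \<ge> 1 \<Longrightarrow> j \<ge> 1 \<Longrightarrow> inner (e i) (e j) = (if i = j then 1 else 0)"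
    and e_complete: "closure (span (e ` {1..})) = UNIV"
    and lam_mono: "\<And>i j. 1 \<le> i \<Longrightarrow> i \<le> j \<Longrightarrow> lam i \<le> lam j"
    and \<alpha>_pos: "\<alpha> > 0" and c_pos: "clam > 0" and C_pos: "Clam > 0"
    and lam_bounds: "\<And>j. j \<ge> 1 \<Longrightarrow> clam * real j powr \<alpha> \<le> lam j \<and> lam j \<le> Clam * real j powr \<alpha>"
    and \<beta>: "0 < \<beta>" "\<beta> < 1"
    and V_sub: "\<And>h. 0 < h \<Longrightarrow> h < 1 \<Longrightarrow> subspace (V h) \<and> V h \<subseteq> domL12 e lam"
    and V_dim: "\<And>h. 0 < h \<Longrightarrow> h < 1 \<Longrightarrow> dim (V h) = N h"
    and Lh_def: "\<And>h \<psi> \<phi>. 0 < h \<Longrightarrow> h < 1 \<Longrightarrow> \<psi> \<in> V h \<Longrightarrow> \<phi> \<in> V h \<Longrightarrow>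
                   Lh h \<psi> \<in> V h \<and> inner (Lh h \<psi>) \<phi> = formL e lam \<psi> \<phi>"
    and eh_orth: "\<And>h i j. 0 < h \<Longrightarrow> h < 1 \<Longrightarrow> i \<in> {1..N h} \<Longrightarrow> j \<in> {1..N h} \<Longrightarrow>
                   inner (eh h i) (eh h j) = (if i = j then 1 else 0)"
    and eh_eig: "\<And>h j. 0 < h \<Longrightarrow> h < 1 \<Longrightarrow> j \<in> {1..N h} \<Longrightarrow>
                   eh h j \<in> V h \<and> Lh h (eh h j) = lamh h j *\<^sub>R eh h j"
    and lamh_mono: "\<And>h i j. 0 < h \<Longrightarrow> h < 1 \<Longrightarrow> 1 \<le> i \<Longrightarrow> i \<le> j \<Longrightarrow> j \<le> N h \<Longrightarrow>
                   lamh h i \<le> lamh h j"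
    \<comment> \<open>(i)\<close>
    and cond_i: "d \<ge> 1" "\<exists>c1 c2. 0 < c1 \<and> 0 < c2 \<and> (\<forall>h. 0 < h \<and> h < 1 \<longrightarrow>
                   c1 * h powr (- real d) \<le> real (N h) \<and> real (N h) \<le> c2 * h powr (- real d))"
    \<comment> \<open>(ii)\<close>
    and cond_ii: "C1 > 0" "C2 > 0" "0 < h0" "h0 < 1" "r > 0" "s > 0" "q > 1"
    and cond_ii_lam: "\<And>h j. 0 < h \<Longrightarrow> h < h0 \<Longrightarrow> j \<in> {1..N h} \<Longrightarrow>
                   lam j \<le> lamh h j \<and> lamh h j \<le> lam j + C1 * h powr r * lam j powr q"
    and cond_ii_e: "\<And>h j. 0 < h \<Longrightarrow> h < h0 \<Longrightarrow> j \<in> {1..N h} \<Longrightarrow>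
                   (norm (e j - eh h j))\<^sup>2 \<le> C2 * h powr (2 * s) * lam j powr q"
    \<comment> \<open>(iii)\<close>
    and cond_iii: "1 / (2 * \<beta>) < \<alpha>" "\<alpha> \<le> min (r / ((q - 1) * real d)) (2 * s / (q * real d))"
  shows "\<exists>k0 C. k0 > 0 \<and> C > 0 \<and>
    (\<forall>T h k. bounded_linear T \<and> (\<forall>x y. inner (T x) y = inner x (T y)) \<and>
       0 < h \<and> h < h0 \<and> 0 < k \<and> k < k0 \<longrightarrow>
       (let Qt = Qop (V h) (Lh h) \<beta> k \<circ> Pitilde e (eh h) (N h);
            Lt = fracpow (eh h) (lamh h) (N h) \<beta> \<circ> Pitilde e (eh h) (N h)
        in \<bar>trace_on e (\<lambda>x. T (Qt (hadjoint Qt x) - Lt (hadjoint Lt x)))\<bar>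
           \<le> C * (exp (- pi\<^sup>2 / k) * h powr (- real d) + exp (- pi\<^sup>2 / (2 * k))
                  + exp (- pi\<^sup>2 / (2 * k)) * f_ab (real d) \<alpha> \<beta> h) * onorm T))"
proof -
  obtain c2 where c2: "0 < c2" "\<And>h. 0 < h \<Longrightarrow> h < 1 \<Longrightarrow> real (N h) \<le> c2 * h powr (- real d)"
    using cond_i(2) by blast
  obtain Cq where Cq: "Cq > 0" "\<And>k l. 0 < k \<Longrightarrow> k \<le> 1 \<Longrightarrow> clam \<le> l \<Longrightarrow>
      \<bar>sinc_quad \<beta> k l - l powr (-\<beta>)\<bar> \<le> Cq * exp (-(pi^2)/(2*k))"
    using sinc_quad_error[OF \<beta> c_pos] by blast
  obtain K1 K2 where K: "0 \<le> K1" "0 \<le> K2" "\<And>h n. 0 < h \<Longrightarrow> h < 1 \<Longrightarrow> real n \<le> c2 * h powr (- real d) \<Longrightarrow>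
      (\<Sum>i\<in>{1..n}. real i powr (-(\<alpha> * \<beta>))) \<le> K1 + K2 * f_ab (real d) \<alpha> \<beta> h"
    using sum_powr_neg_le[OF _ c2(1), of \<alpha> \<beta> d] \<alpha>_pos \<beta> by auto
  define cl where "cl = clam powr (-\<beta>)"
  define C where "C = c2 * Cq\<^sup>2 + 2 * Cq * cl * (K1 + K2) + 1"
  have lam_pos: "0 < lam j" if "j \<ge> 1" for j
  proof -
    have "0 < clam * real j powr \<alpha>" using c_pos that by simp
    thus ?thesis using lam_bounds[OF that] by linarith
  qed
  have bound: "\<bar>trace_on e (\<lambda>x. T (Qt (hadjoint Qt x) - Lt (hadjoint Lt x)))\<bar>
           \<le> C * (exp (- pi\<^sup>2 / k) * h powr (- real d) + exp (- pi\<^sup>2 / (2 * k))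
                  + exp (- pi\<^sup>2 / (2 * k)) * f_ab (real d) \<alpha> \<beta> h) * onorm T"
    if T: "bounded_linear T" and h: "0 < h" "h < h0" and k: "0 < k" "k < 1"
      and Qt: "Qt = Qop (V h) (Lh h) \<beta> k \<circ> Pitilde e (eh h) (N h)"
      and Lt: "Lt = fracpow (eh h) (lamh h) (N h) \<beta> \<circ> Pitilde e (eh h) (N h)" for T h k Qt Lt
  proof -
    have h1: "h < 1" using h cond_ii(4) by linarith
    have lamh_ge: "clam * real j powr \<alpha> \<le> lamh h j" if "j \<in> {1..N h}" for j
      using cond_ii_lam[OF h that] lam_bounds[of j] that by fastforce
    have "galerkin_eigensystem e lam (V h) (N h) (Lh h) (eh h) (lamh h)"
    proof
      show "lamh h j > 0" if "j \<in> {1..N h}" for j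
        using lamh_ge[OF that] lam_pos[of j] cond_ii_lam[OF h that] that by force
      show "subspace (V h)" "V h \<subseteq> domL12 e lam" using V_sub[OF h(1) h1] by auto
    qed (fact e_orth e_complete lam_pos Lh_def[OF h(1) h1] eh_orth[OF h(1) h1] eh_eig[OF h(1) h1])+
    then interpret galerkin_eigensystem e lam "V h" "N h" "Lh h" "eh h" "lamh h" .
    have "\<bar>trace_on e (\<lambda>x. T (Qt (hadjoint Qt x) - Lt (hadjoint Lt x)))\<bar>
        \<le> (real (N h) * (Cq * exp (- pi\<^sup>2 / (2 * k)))\<^sup>2 + 2 * (Cq * exp (- pi\<^sup>2 / (2 * k))) *
             (cl * (\<Sum>i\<in>{1..N h}. real i powr (-(\<alpha> * \<beta>))))) * onorm T"
      unfolding Qt Lt cl_def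
    proof (rule trace_Qop_fracpow_le_powr_sum[OF T c_pos \<beta>(1)])
      show "\<bar>sinc_quad \<beta> k l - l powr (-\<beta>)\<bar> \<le> Cq * exp (- pi\<^sup>2 / (2 * k))" if "clam \<le> l" for l
        using Cq(2)[OF k(1) _ that] k by simp
    qed (use Cq(1) \<alpha>_pos lamh_ge in auto)
    also have "\<dots> \<le> C * (exp (- pi\<^sup>2 / k) * h powr (- real d) + exp (- pi\<^sup>2 / (2 * k))
                  + exp (- pi\<^sup>2 / (2 * k)) * f_ab (real d) \<alpha> \<beta> h) * onorm T"
    proof (rule mult_right_mono[OF _ onorm_pos_le[OF T]])
      show "real (N h) * (Cq * exp (- pi\<^sup>2 / (2 * k)))\<^sup>2 + 2 * (Cq * exp (- pi\<^sup>2 / (2 * k))) *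
             (cl * (\<Sum>i\<in>{1..N h}. real i powr (-(\<alpha> * \<beta>))))
          \<le> C * (exp (- pi\<^sup>2 / k) * h powr (- real d) + exp (- pi\<^sup>2 / (2 * k))
                  + exp (- pi\<^sup>2 / (2 * k)) * f_ab (real d) \<alpha> \<beta> h)"
        unfolding C_def
        by (rule quadrature_error_terms_le[OF c2(2)[OF h(1) h1] K(3)[OF h(1) h1 c2(2)[OF h(1) h1]]])
           (use k c2(1) Cq(1) K(1,2) in \<open>auto simp: f_ab_def cl_def\<close>)
    qed
    finally show ?thesis .
  qed
  have "C > 0" unfolding C_def using c2(1) Cq(1) K c_pos by (simp add: cl_def add_nonneg_pos)
  thus ?thesis using bound by (intro exI[of _ 1] exI[of _ C]) (auto simp: Let_def)
qed

end
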